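(* There exist universal constants $c_2, c_3 > 0$ such that the following holds. Let $n \ge 2$, $L, \nu, D > 0$, and let $K \ge 1$ be an integer; set $\mu := \frac{L^{1/3}\nu^{2/3}}{D^{2/3}n^{1/3}K^{2/3}}$ and suppose $$K \ge c_3\max\left\{\frac{L^2D^2n}{\nu^2},\ \frac{\nu}{\mu D n^{1/2}}\right\}.$$ Then there exist a $2$-dimensional function $F \in \mathcal{F}(L,0,0,\nu)$ (with $n$ components) with a minimizer $\mathbf{x}^*$ and an initialization point $\mathbf{x}_0^1$ with $\|\mathbf{x}_0^1 - \mathbf{x}^*\| = D$ such that for any constant step size $0 < \eta \le \frac{1}{c_2Ln}$ and any nonnegative weights $\alpha_1,\dots,\alpha_{K+1}$ (not all zero), the weighted average iterate $\hat{\mathbf{x}} = \frac{\sum_{k=1}^{K+1}\alpha_k\mathbf{x}_0^k}{\sum_{k=1}^{K+1}\alpha_k}$ of SGD-RR satisfies $$\mathbb{E}\left[F(\hat{\mathbf{x}}) - F^*\right] = \Omega\left(\frac{L^{1/3}\nu^{2/3}D^{4/3}}{n^{1/3}K^{2/3}}\right).$$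
   Context: Finite-sum problem: $F(\mathbf{x}) = \frac1n\sum_{i=1}^n f_i(\mathbf{x})$ on $\mathbb{R}^d$, $F^* = \inf F$. $\mathcal{F}(L,\mu,\tau,\nu)$: all such $F$ with each $f_i$ $L$-smooth and convex, $F$ $\mu$-strongly convex ($\mu = 0$ meaning convex), and $\|\nabla f_i(\mathbf{x}) - \nabla F(\mathbf{x})\| \le \tau\|\nabla F(\mathbf{x})\| + \nu$ for all $i,\mathbf{x}$. SGD-RR with constant step size $\eta$: in each epoch $k=1,\dots,K$ a uniformly random permutation $\sigma_k$ of $[n]$ is drawn independently, $\mathbf{x}_i^k = \mathbf{x}_{i-1}^k - \eta\nabla f_{\sigma_k(i)}(\mathbf{x}_{i-1}^k)$, $\mathbf{x}_0^{k+1} = \mathbf{x}_n^k$. $\Omega(g)$ means at least a universal positive constant times $g$. *)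

theory Defs
  imports "HOL-Analysis.Analysis"
begin

definition grad :: "('a::real_inner \<Rightarrow> real) \<Rightarrow> 'a \<Rightarrow> 'a" where
  "grad f x = (SOME g. (f has_derivative (\<lambda>h. g \<bullet> h)) (at x))"

definition smooth :: "real \<Rightarrow> ('a::real_inner \<Rightarrow> real) \<Rightarrow> bool" where
  "smooth L f \<longleftrightarrow> (\<forall>x. f differentiable (at x)) \<and>
     (\<forall>x y. norm (grad f x - grad f y) \<le> L * norm (x - y))"

definition strongly_convex :: "real \<Rightarrow> ('a::real_inner \<Rightarrow> real) \<Rightarrow> bool" where
  "strongly_convex \<mu> f \<longleftrightarrow> convex_on UNIV (\<lambda>x. f x - \<mu> / 2 * (norm x)\<^sup>2)"

definition Fsum :: "nat \<Rightarrow> (nat \<Rightarrow> 'a \<Rightarrow> real) \<Rightarrow> 'a \<Rightarrow> real" where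
  "Fsum n f x = (\<Sum>i<n. f i x) / real n"

definition fclass :: "nat \<Rightarrow> real \<Rightarrow> real \<Rightarrow> real \<Rightarrow> real \<Rightarrow> (nat \<Rightarrow> 'a::real_inner \<Rightarrow> real) \<Rightarrow> bool" where
  "fclass n L \<mu> \<tau> \<nu> f \<longleftrightarrow>
     (\<forall>i<n. smooth L (f i) \<and> convex_on UNIV (f i)) \<and>
     strongly_convex \<mu> (Fsum n f) \<and>
     (\<forall>i<n. \<forall>x. norm (grad (f i) x - grad (Fsum n f) x) \<le> \<tau> * norm (grad (Fsum n f) x) + \<nu>)"

primrec inner_iter :: "(nat \<Rightarrow> 'a::real_inner \<Rightarrow> real) \<Rightarrow> real \<Rightarrow> (nat \<Rightarrow> nat) \<Rightarrow> 'a \<Rightarrow> nat \<Rightarrow> 'a" where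
  "inner_iter f \<eta> \<sigma> x 0 = x"
| "inner_iter f \<eta> \<sigma> x (Suc i) =
     inner_iter f \<eta> \<sigma> x i - \<eta> *\<^sub>R grad (f (\<sigma> i)) (inner_iter f \<eta> \<sigma> x i)"

text \<open>epoch_start n f eta s x0 k = x_0^(k+1), where s k is the permutation of epoch k (k >= 1).\<close>
primrec epoch_start :: "nat \<Rightarrow> (nat \<Rightarrow> 'a::real_inner \<Rightarrow> real) \<Rightarrow> real \<Rightarrow> (nat \<Rightarrow> nat \<Rightarrow> nat) \<Rightarrow> 'a \<Rightarrow> nat \<Rightarrow> 'a" where
  "epoch_start n f \<eta> s x0 0 = x0"
| "epoch_start n f \<eta> s x0 (Suc k) = inner_iter f \<eta> (s (Suc k)) (epoch_start n f \<eta> s x0 k) n"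

definition avg_iterate :: "nat \<Rightarrow> (nat \<Rightarrow> 'a::real_inner \<Rightarrow> real) \<Rightarrow> real \<Rightarrow> (nat \<Rightarrow> nat \<Rightarrow> nat) \<Rightarrow> 'a \<Rightarrow> nat \<Rightarrow> (nat \<Rightarrow> real) \<Rightarrow> 'a" where
  "avg_iterate n f \<eta> s x0 K \<alpha> =
     (1 / (\<Sum>k\<in>{1..K+1}. \<alpha> k)) *\<^sub>R (\<Sum>k\<in>{1..K+1}. \<alpha> k *\<^sub>R epoch_start n f \<eta> s x0 (k - 1))"

text \<open>Sample space: K independent uniformly random permutations sigma_1..sigma_K of {0..<n}.\<close>
definition perm_seqs :: "nat \<Rightarrow> nat \<Rightarrow> (nat \<Rightarrow> nat \<Rightarrow> nat) set" where
  "perm_seqs n K = PiE {1..K} (\<lambda>_. {\<sigma>. \<sigma> permutes {..<n}})"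

definition expect_rr :: "nat \<Rightarrow> nat \<Rightarrow> ((nat \<Rightarrow> nat \<Rightarrow> nat) \<Rightarrow> real) \<Rightarrow> real" where
  "expect_rr n K X = (\<Sum>s\<in>perm_seqs n K. X s) / real (card (perm_seqs n K))"

end

theory Submission
  imports Defs
begin

text \<open>The hard instance is \<open>F x = \<mu>/2 * x\<^sub>1^2 + G x\<^sub>2\<close>, where \<open>G t\<close> is \<open>L/4 * t^2\<close> for
  \<open>t \<ge> 0\<close> and \<open>L/2 * t^2\<close> for \<open>t < 0\<close>, split into the components \<open>F x + b\<^sub>k * x\<^sub>2\<close> whose
  offsets \<open>b\<^sub>k\<close> are \<open>\<nu>\<close> on \<open>m = n div 2\<close> indices, \<open>-\<nu>\<close> on their \<open>m\<close> partners and \<open>0\<close>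
  otherwise. The first coordinate contracts deterministically by \<open>(1 - \<eta> \<mu>)^n\<close> per epoch.
  On the second coordinate the offsets cancel over an epoch, but within an epoch the iterate
  moves by \<open>\<eta>\<close> times the prefix sums of the shuffled offsets, and since \<open>G\<close> is steeper on the
  negative side this wandering pushes the iterate upwards, in proportion to the absolute prefix
  sums. Swapping partners turns the prefix sums into Rademacher sums, whose absolute values
  Khintchine's inequality bounds below through their variance, i.e. through the distances
  between the positions of partners, which are of order \<open>n\<close> on average. Each epoch thus gains
  \<open>\<Omega>(\<eta>^2 L \<nu> n^(3/2))\<close> against a contraction by \<open>1 - \<Theta>(\<eta> L n)\<close>, so after
  \<open>\<Omega>(1/(\<eta> L n))\<close> epochs the expected second coordinate is \<open>\<Omega>(\<eta> \<nu> sqrt n)\<close>. Either the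
  step size is below \<open>1/(\<mu> n K)\<close>, and the first coordinate keeps \<open>F\<close> at \<open>\<Omega>(\<mu> D^2)\<close>, or it
  is larger, and the second coordinate contributes \<open>\<Omega>(L \<eta>^2 \<nu>^2 n)\<close>; the choice of \<open>\<mu>\<close>
  makes both bounds \<open>\<Omega>(\<mu> D^2)\<close>.\<close>

section \<open>A quadratic with a kink at zero\<close>

definition kinked_quad :: "real \<Rightarrow> real \<Rightarrow> real" where
  "kinked_quad L t = 3/8 * L * t^2 - L/8 * (t * \<bar>t\<bar>)"

definition kinked_quad_deriv :: "real \<Rightarrow> real \<Rightarrow> real" where
  "kinked_quad_deriv L t = 3/4 * L * t - L/4 * \<bar>t\<bar>"

lemma kinked_quad_eq: "kinked_quad L t = (if t \<ge> 0 then L/4 * t^2 else L/2 * t^2)"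
  unfolding kinked_quad_def by (auto simp: power2_eq_square)

lemma kinked_quad_deriv_eq: "kinked_quad_deriv L t = (if t \<ge> 0 then L/2 * t else L * t)"
  unfolding kinked_quad_deriv_def by (auto simp: algebra_simps)

lemma uminus_kinked_quad_deriv: "- kinked_quad_deriv L t = L/2 * max (- t) 0 - L/2 * t"
  unfolding kinked_quad_deriv_eq by auto

lemma abs_kinked_quad_deriv_le: "L \<ge> 0 \<Longrightarrow> \<bar>kinked_quad_deriv L t\<bar> \<le> L * \<bar>t\<bar>"
  unfolding kinked_quad_deriv_eq by (auto simp: abs_mult)

lemma kinked_quad_deriv_lipschitz:
  assumes "L \<ge> 0"
  shows "\<bar>kinked_quad_deriv L s - kinked_quad_deriv L t\<bar> \<le> L * \<bar>s - t\<bar>"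
proof -
  have "\<bar>kinked_quad_deriv L s - kinked_quad_deriv L t\<bar> = \<bar>3/4 * L * (s - t) - L/4 * (\<bar>s\<bar> - \<bar>t\<bar>)\<bar>"
    unfolding kinked_quad_deriv_def by (simp add: field_simps)
  also have "\<dots> \<le> 3/4 * L * \<bar>s - t\<bar> + L/4 * \<bar>\<bar>s\<bar> - \<bar>t\<bar>\<bar>"
    using assms by (simp add: abs_mult order_trans[OF abs_triangle_ineq4])
  also have "\<dots> \<le> 3/4 * L * \<bar>s - t\<bar> + L/4 * \<bar>s - t\<bar>"
    using assms by (intro add_left_mono mult_left_mono) (auto simp: abs_triangle_ineq3)
  finally show ?thesis by simp
qed

lemma kinked_quad_deriv_mono:
  "L \<ge> 0 \<Longrightarrow> s \<le> t \<Longrightarrow> kinked_quad_deriv L s \<le> kinked_quad_deriv L t"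
  unfolding kinked_quad_deriv_eq using mult_left_mono[of s t L] mult_nonneg_nonpos[of L s] by auto

lemma has_real_derivative_times_abs:
  "((\<lambda>t::real. t * \<bar>t\<bar>) has_real_derivative 2 * \<bar>x\<bar>) (at x)"
proof -
  consider "x = 0" | "x > 0" | "x < 0" by linarith
  then show ?thesis
  proof cases
    case 1
    have "\<forall>\<^sub>F y in at x. \<bar>y\<bar> = (y * \<bar>y\<bar> - x * \<bar>x\<bar>) / (y - x)"
      unfolding 1 eventually_at_filter by (auto intro!: always_eventually)
    moreover have "((\<lambda>y::real. \<bar>y\<bar>) \<longlongrightarrow> 2 * \<bar>x\<bar>) (at x)"
      using 1 tendsto_rabs[OF tendsto_ident_at, of x] by simp
    ultimately show ?thesis
      unfolding has_field_derivative_iff by (rule Lim_transform_eventually[rotated])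
  next
    case 2
    have "((\<lambda>t. t * t) has_real_derivative 2 * \<bar>x\<bar>) (at x)"
      using 2 by (auto intro!: derivative_eq_intros)
    then show ?thesis
      by (rule has_field_derivative_transform_within_open[of _ _ _ "{0<..}"]) (use 2 in auto)
  next
    case 3
    have "((\<lambda>t. - (t * t)) has_real_derivative 2 * \<bar>x\<bar>) (at x)"
      using 3 by (auto intro!: derivative_eq_intros)
    then show ?thesis
      by (rule has_field_derivative_transform_within_open[of _ _ _ "{..<0}"]) (use 3 in auto)
  qed
qed

lemma kinked_quad_has_real_derivative:
  "(kinked_quad L has_real_derivative kinked_quad_deriv L x) (at x)"
proof -
  have "((\<lambda>t. 3/8 * L * t^2 - L/8 * (t * \<bar>t\<bar>)) has_real_derivative
      3/8 * L * (2 * x) - L/8 * (2 * \<bar>x\<bar>)) (at x)"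
    by (intro DERIV_diff DERIV_cmult has_real_derivative_times_abs) (auto intro!: derivative_eq_intros)
  moreover have "3/8 * L * (2 * x) - L/8 * (2 * \<bar>x\<bar>) = kinked_quad_deriv L x"
    unfolding kinked_quad_deriv_def by simp
  ultimately show ?thesis
    unfolding kinked_quad_def[abs_def] by simp
qed

lemma convex_on_kinked_quad: "L \<ge> 0 \<Longrightarrow> convex_on UNIV (kinked_quad L)"
  by (rule convex_on_realI[where f'="kinked_quad_deriv L"])
     (auto intro: kinked_quad_has_real_derivative kinked_quad_deriv_mono)

lemma kinked_quad_ge: "L \<ge> 0 \<Longrightarrow> kinked_quad L t \<ge> L/4 * (max t 0)^2"
  unfolding kinked_quad_eq by auto

lemma kinked_quad_nonneg: "L \<ge> 0 \<Longrightarrow> kinked_quad L t \<ge> 0"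
  unfolding kinked_quad_eq by auto


section \<open>One pass of shuffled gradient steps on the kink\<close>

fun kink_pass :: "real \<Rightarrow> real \<Rightarrow> (nat \<Rightarrow> real) \<Rightarrow> real \<Rightarrow> nat \<Rightarrow> real" where
  "kink_pass L \<eta> b y 0 = y"
| "kink_pass L \<eta> b y (Suc i) =
     kink_pass L \<eta> b y i - \<eta> * (kinked_quad_deriv L (kink_pass L \<eta> b y i) + b i)"

lemma kink_pass_eq:
  "kink_pass L \<eta> b y i =
     y - \<eta> * (\<Sum>j<i. b j) - \<eta> * (\<Sum>j<i. kinked_quad_deriv L (kink_pass L \<eta> b y j))"
  by (induction i) (auto simp: algebra_simps)

lemma kink_pass_near_offset_path:
  assumes L: "L > 0" and eta: "\<eta> > 0" and small: "\<eta> * L * n \<le> 1/2" and "i \<le> n"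
  shows "\<bar>kink_pass L \<eta> b y i - (y - \<eta> * (\<Sum>j<i. b j))\<bar>
           \<le> 2 * \<eta> * L * (\<Sum>j<n. \<bar>y - \<eta> * (\<Sum>l<j. b l)\<bar>)"
proof -
  define r where "r = kink_pass L \<eta> b y"
  define z where "z = (\<lambda>i. y - \<eta> * (\<Sum>j<i. b j))"
  define A where "A = (\<Sum>j<n. \<bar>r j\<bar>)"
  define Z where "Z = (\<Sum>j<n. \<bar>z j\<bar>)"
  have dev: "\<bar>r i - z i\<bar> \<le> \<eta> * L * A" if "i \<le> n" for i
  proof -
    have "r i - z i = - \<eta> * (\<Sum>j<i. kinked_quad_deriv L (r j))"
      unfolding r_def z_def by (subst kink_pass_eq) simp
    then have "\<bar>r i - z i\<bar> = \<eta> * \<bar>\<Sum>j<i. kinked_quad_deriv L (r j)\<bar>"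
      using eta by (simp add: abs_mult)
    also have "\<dots> \<le> \<eta> * (\<Sum>j<i. L * \<bar>r j\<bar>)"
      using eta L by (intro mult_left_mono order_trans[OF sum_abs] sum_mono abs_kinked_quad_deriv_le) auto
    also have "\<dots> \<le> \<eta> * (L * A)"
      unfolding A_def sum_distrib_left[symmetric] using that eta L
      by (intro mult_left_mono sum_mono2) auto
    finally show ?thesis by (simp add: mult.assoc)
  qed
  have "\<bar>r j\<bar> \<le> \<bar>z j\<bar> + \<eta> * L * A" if "j < n" for j
    using dev[of j] that by linarith
  then have "A \<le> (\<Sum>j<n. \<bar>z j\<bar> + \<eta> * L * A)"
    by (subst (1) A_def) (auto intro: sum_mono)
  then have "A * (1 - \<eta> * L * n) \<le> Z"
    by (simp add: sum.distrib Z_def algebra_simps)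
  moreover have "A * (1/2) \<le> A * (1 - \<eta> * L * n)"
    using small unfolding A_def by (intro mult_left_mono) (auto simp: sum_nonneg)
  ultimately have "\<eta> * L * A \<le> \<eta> * L * (2 * Z)"
    using eta L by (intro mult_left_mono) auto
  then show ?thesis
    using dev[OF \<open>i \<le> n\<close>] unfolding r_def z_def Z_def by simp
qed

definition pass_lb :: "real \<Rightarrow> real \<Rightarrow> nat \<Rightarrow> real \<Rightarrow> (nat \<Rightarrow> real) \<Rightarrow> real" where
  "pass_lb L \<eta> n y S =
     y - \<eta> * (L/2) * n * y + \<eta> * (L/2) * (\<Sum>i<n. max (\<eta> * S i - y) 0)
       + \<eta>^2 * (L/2) * (\<Sum>i<n. S i) - 2 * \<eta>^2 * L^2 * n * (\<Sum>i<n. \<bar>y - \<eta> * S i\<bar>)"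

lemma kink_pass_ge_pass_lb:
  assumes L: "L > 0" and eta: "\<eta> > 0" and small: "\<eta> * L * n \<le> 1/2"
    and offsets: "(\<Sum>j<n. b j) = 0"
  shows "kink_pass L \<eta> b y n \<ge> pass_lb L \<eta> n y (\<lambda>i. \<Sum>j<i. b j)"
proof -
  define S where "S = (\<lambda>i. \<Sum>j<i. b j)"
  define r where "r = kink_pass L \<eta> b y"
  define z where "z = (\<lambda>i. y - \<eta> * S i)"
  define Z where "Z = (\<Sum>j<n. \<bar>z j\<bar>)"
  have close: "- kinked_quad_deriv L (r i) \<ge> - kinked_quad_deriv L (z i) - L * (2 * \<eta> * L * Z)"
    if "i \<in> {..<n}" for i
  proof -
    have "\<bar>r i - z i\<bar> \<le> 2 * \<eta> * L * Z"
      unfolding r_def z_def Z_def S_def using that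
      by (intro kink_pass_near_offset_path[OF L eta small]) auto
    then have "L * \<bar>r i - z i\<bar> \<le> L * (2 * \<eta> * L * Z)"
      using L by (intro mult_left_mono) auto
    then show ?thesis
      using kinked_quad_deriv_lipschitz[of L "r i" "z i"] L by linarith
  qed
  have "r n = y + \<eta> * (\<Sum>i<n. - kinked_quad_deriv L (r i))"
    unfolding r_def using offsets by (subst kink_pass_eq) (simp add: sum_negf)
  also have "\<dots> \<ge> y + \<eta> * (\<Sum>i<n. - kinked_quad_deriv L (z i) - L * (2 * \<eta> * L * Z))"
    using eta close by (intro add_left_mono mult_left_mono sum_mono) auto
  also have "y + \<eta> * (\<Sum>i<n. - kinked_quad_deriv L (z i) - L * (2 * \<eta> * L * Z)) = pass_lb L \<eta> n y S"
    unfolding pass_lb_def uminus_kinked_quad_deriv z_def Z_def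
    by (simp add: sum.distrib sum_subtractf sum_distrib_left algebra_simps power2_eq_square)
  finally show ?thesis unfolding r_def S_def .
qed

definition epoch_rate :: "real \<Rightarrow> real \<Rightarrow> nat \<Rightarrow> real" where
  "epoch_rate L \<eta> n = 3/4 * (\<eta> * L * n) + 2 * (\<eta> * L * n)^2"

lemma pos_part_pair_ge:
  "max (x - y) 0 + max (- x - y) 0 \<ge> 3/4 * \<bar>x\<bar> - y + 1/4 * max (- y) (0::real)"
  by (auto simp: abs_if max_def)

text \<open>Averaging over \<open>\<pm>S\<close> cancels the linear terms; the kink leaves a net upward push
  proportional to \<open>\<Sum>i<n. \<bar>S i\<bar>\<close>.\<close>

lemma pass_lb_antipodal:
  assumes L: "L > 0" and eta: "\<eta> > 0" and small: "\<eta> * L * n \<le> 1/64"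
  shows "pass_lb L \<eta> n y S + pass_lb L \<eta> n y (\<lambda>i. - S i)
           \<ge> 2 * (1 - epoch_rate L \<eta> n) * y + 5/16 * \<eta>^2 * L * (\<Sum>i<n. \<bar>S i\<bar>)"
proof -
  define T where "T = (\<Sum>i<n. \<bar>S i\<bar>)"
  define P where "P = (\<Sum>i<n. max (\<eta> * S i - y) 0) + (\<Sum>i<n. max (\<eta> * - S i - y) 0)"
  define Q where "Q = (\<Sum>i<n. \<bar>y - \<eta> * S i\<bar>) + (\<Sum>i<n. \<bar>y - \<eta> * - S i\<bar>)"
  define u where "u = \<eta> * L * n"
  have u: "0 \<le> u" "u \<le> 1/64" using eta L small unfolding u_def by auto
  have T0: "T \<ge> 0" unfolding T_def by (simp add: sum_nonneg)
  have "3/4 * \<eta> * T - n * y + n/4 * max (- y) 0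
      = (\<Sum>i<n. 3/4 * (\<eta> * \<bar>S i\<bar>) - y + 1/4 * max (- y) 0)"
    unfolding T_def by (simp add: sum.distrib sum_subtractf sum_distrib_left mult.assoc)
  also have "\<dots> \<le> P"
    unfolding P_def sum.distrib[symmetric]
    using pos_part_pair_ge[of "\<eta> * S _" y] eta by (intro sum_mono) (simp add: abs_mult)
  finally have "\<eta> * (L/2) * P \<ge> \<eta> * (L/2) * (3/4 * \<eta> * T - n * y + n/4 * max (- y) 0)"
    using eta L by (intro mult_left_mono) auto
  moreover have "Q \<le> (\<Sum>i<n. 2 * \<bar>y\<bar> + 2 * (\<eta> * \<bar>S i\<bar>))"
    unfolding Q_def sum.distrib[symmetric]
  proof (rule sum_mono)
    fix i
    show "\<bar>y - \<eta> * S i\<bar> + \<bar>y - \<eta> * - S i\<bar> \<le> 2 * \<bar>y\<bar> + 2 * (\<eta> * \<bar>S i\<bar>)"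
      using abs_triangle_ineq4[of y "\<eta> * S i"] abs_triangle_ineq[of y "\<eta> * S i"] eta
      by (simp add: abs_mult)
  qed
  then have "2 * \<eta>^2 * L^2 * n * Q \<le> 2 * \<eta>^2 * L^2 * n * (2 * n * \<bar>y\<bar> + 2 * \<eta> * T)"
    unfolding T_def by (intro mult_left_mono) (auto simp: sum.distrib sum_distrib_left mult.assoc)
  moreover have "pass_lb L \<eta> n y S + pass_lb L \<eta> n y (\<lambda>i. - S i)
      = 2 * y - \<eta> * L * n * y + \<eta> * (L/2) * P - 2 * \<eta>^2 * L^2 * n * Q"
    unfolding pass_lb_def P_def Q_def by (simp add: sum_negf algebra_simps)
  moreover have "2 * y - \<eta> * L * n * y + \<eta> * (L/2) * (3/4 * \<eta> * T - n * y + n/4 * max (- y) 0)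
      - 2 * \<eta>^2 * L^2 * n * (2 * n * \<bar>y\<bar> + 2 * \<eta> * T)
      = 2 * (1 - epoch_rate L \<eta> n) * y + u * (1/8 - 8 * u) * max (- y) 0
        + (3/8 - 4 * u) * (\<eta>^2 * L * T)"
    unfolding epoch_rate_def u_def abs_if[of y]
    by (simp add: max_def algebra_simps power2_eq_square)
  moreover have "u * (1/8 - 8 * u) * max (- y) 0 \<ge> 0"
    using u by simp
  moreover have "(3/8 - 4 * u) * (\<eta>^2 * L * T) \<ge> 5/16 * (\<eta>^2 * L * T)"
    using u T0 L by (intro mult_right_mono) auto
  ultimately show ?thesis unfolding T_def by linarith
qed

lemma sum_pass_lb_involution:
  fixes S :: "'a \<Rightarrow> nat \<Rightarrow> real"
  assumes inv: "\<And>A. A \<in> E \<Longrightarrow> c A \<in> E" "\<And>A. A \<in> E \<Longrightarrow> c (c A) = A"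
    and opp: "\<And>A i. A \<in> E \<Longrightarrow> S (c A) i = - S A i"
    and L: "L > 0" and eta: "\<eta> > 0" and small: "\<eta> * L * n \<le> 1/64"
  shows "(\<Sum>A\<in>E. pass_lb L \<eta> n y (S A))
           \<ge> card E * ((1 - epoch_rate L \<eta> n) * y) + 5/32 * \<eta>^2 * L * (\<Sum>A\<in>E. \<Sum>i<n. \<bar>S A i\<bar>)"
proof -
  have "(\<Sum>A\<in>E. pass_lb L \<eta> n y (\<lambda>i. - S A i)) = (\<Sum>A\<in>E. pass_lb L \<eta> n y (S (c A)))"
  proof (rule sum.cong)
    fix A assume "A \<in> E"
    then have "S (c A) = (\<lambda>i. - S A i)" using opp by auto
    then show "pass_lb L \<eta> n y (\<lambda>i. - S A i) = pass_lb L \<eta> n y (S (c A))" by simp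
  qed simp
  also have "\<dots> = (\<Sum>A\<in>E. pass_lb L \<eta> n y (S A))"
    by (rule sum.reindex_bij_witness[of _ c c]) (use inv in auto)
  finally have "2 * (\<Sum>A\<in>E. pass_lb L \<eta> n y (S A))
      = (\<Sum>A\<in>E. pass_lb L \<eta> n y (S A) + pass_lb L \<eta> n y (\<lambda>i. - S A i))"
    by (simp add: sum.distrib)
  also have "\<dots> \<ge> (\<Sum>A\<in>E. 2 * (1 - epoch_rate L \<eta> n) * y + 5/16 * \<eta>^2 * L * (\<Sum>i<n. \<bar>S A i\<bar>))"
    by (intro sum_mono pass_lb_antipodal L eta small)
  also have "(\<Sum>A\<in>E. 2 * (1 - epoch_rate L \<eta> n) * y + 5/16 * \<eta>^2 * L * (\<Sum>i<n. \<bar>S A i\<bar>))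
      = card E * (2 * (1 - epoch_rate L \<eta> n) * y)
          + 5/16 * \<eta>^2 * L * (\<Sum>A\<in>E. \<Sum>i<n. \<bar>S A i\<bar>)"
    by (simp add: sum.distrib sum_distrib_left)
  also have "\<dots> = 2 * (card E * ((1 - epoch_rate L \<eta> n) * y)
          + 5/32 * \<eta>^2 * L * (\<Sum>A\<in>E. \<Sum>i<n. \<bar>S A i\<bar>))"
    by (simp add: algebra_simps)
  finally show ?thesis by (rule mult_left_le_imp_le) simp
qed


section \<open>Rademacher sums\<close>

text \<open>A set \<open>A \<subseteq> I\<close> encodes the sign pattern that is negative exactly on \<open>A\<close>, so a sum over
  \<open>Pow I\<close> is \<open>2 ^ card I\<close> times an expectation over independent uniform signs.\<close>

definition rademacher_sum :: "'a set \<Rightarrow> ('a \<Rightarrow> real) \<Rightarrow> 'a set \<Rightarrow> real" where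
  "rademacher_sum I c A = (\<Sum>t\<in>I. (if t \<in> A then - 1 else 1) * c t)"

lemma sum_Pow_insert:
  assumes "finite F" "x \<notin> F"
  shows "(\<Sum>A\<in>Pow (insert x F). h A) = (\<Sum>A\<in>Pow F. h A + h (insert x A))"
proof -
  have inj: "inj_on (insert x) (Pow F)"
    using assms by (intro inj_onI) (metis PowD Diff_insert_absorb in_mono)
  have "(\<Sum>A\<in>Pow (insert x F). h A) = (\<Sum>A\<in>Pow F. h A) + (\<Sum>A\<in>insert x ` Pow F. h A)"
    unfolding Pow_insert using assms by (intro sum.union_disjoint) auto
  also have "(\<Sum>A\<in>insert x ` Pow F. h A) = (\<Sum>A\<in>Pow F. h (insert x A))"
    using sum.reindex[OF inj] by simp
  finally show ?thesis by (simp add: sum.distrib)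
qed

lemma rademacher_sum_insert:
  assumes "finite F" "x \<notin> F" "A \<subseteq> F"
  shows "rademacher_sum (insert x F) c A = c x + rademacher_sum F c A"
    and "rademacher_sum (insert x F) c (insert x A) = - c x + rademacher_sum F c A"
proof -
  show "rademacher_sum (insert x F) c A = c x + rademacher_sum F c A"
    using assms unfolding rademacher_sum_def by auto
  have "(\<Sum>t\<in>F. (if t \<in> insert x A then - 1 else 1) * c t) = rademacher_sum F c A"
    unfolding rademacher_sum_def using assms by (intro sum.cong) auto
  then show "rademacher_sum (insert x F) c (insert x A) = - c x + rademacher_sum F c A"
    using assms unfolding rademacher_sum_def by simp
qed

lemma sum_Pow_rademacher_sum_insert:
  assumes "finite F" "x \<notin> F"
  shows "(\<Sum>A\<in>Pow (insert x F). g (rademacher_sum (insert x F) c A))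
           = (\<Sum>A\<in>Pow F. g (c x + rademacher_sum F c A) + g (- c x + rademacher_sum F c A))"
  using assms by (subst sum_Pow_insert) (auto simp: rademacher_sum_insert)

lemma rademacher_sum_Diff:
  "A \<subseteq> I \<Longrightarrow> rademacher_sum I c (I - A) = - rademacher_sum I c A"
  unfolding rademacher_sum_def by (simp add: sum_negf[symmetric]) (intro sum.cong; auto)

lemma rademacher_sum_moments:
  assumes "finite I"
  shows "(\<Sum>A\<in>Pow I. (rademacher_sum I c A)^2) = 2 ^ card I * (\<Sum>t\<in>I. (c t)^2)"
    and "(\<Sum>A\<in>Pow I. (rademacher_sum I c A)^4) \<le> 3 * 2 ^ card I * (\<Sum>t\<in>I. (c t)^2)^2"
  using assms
proof (induction I rule: finite_induct)
  case empty
  { case 1 show ?case by (simp add: rademacher_sum_def) }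
  { case 2 show ?case by (simp add: rademacher_sum_def) }
next
  case (insert x F)
  define s where "s = (\<Sum>t\<in>F. (c t)^2)"
  define X where "X = rademacher_sum F c"
  have s0: "s \<ge> 0" unfolding s_def by (simp add: sum_nonneg)
  have card: "card (Pow F) = 2 ^ card F" using insert by (simp add: card_Pow)
  { case 1
    have "(\<Sum>A\<in>Pow (insert x F). (rademacher_sum (insert x F) c A)^2)
        = (\<Sum>A\<in>Pow F. (c x + X A)^2 + (- c x + X A)^2)"
      unfolding X_def by (rule sum_Pow_rademacher_sum_insert[OF insert.hyps(1,2), where g="\<lambda>v. v^2"])
    also have "\<dots> = (\<Sum>A\<in>Pow F. 2 * (X A)^2 + 2 * (c x)^2)"
      by (intro sum.cong) (simp_all add: power2_eq_square algebra_simps)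
    also have "\<dots> = 2 ^ card (insert x F) * (\<Sum>t\<in>insert x F. (c t)^2)"
      using insert card unfolding X_def
      by (simp add: sum.distrib sum_distrib_left[symmetric] algebra_simps)
    finally show ?case .
  }
  { case 2
    have "(\<Sum>A\<in>Pow (insert x F). (rademacher_sum (insert x F) c A)^4)
        = (\<Sum>A\<in>Pow F. (c x + X A)^4 + (- c x + X A)^4)"
      unfolding X_def by (rule sum_Pow_rademacher_sum_insert[OF insert.hyps(1,2), where g="\<lambda>v. v^4"])
    also have "\<dots> = (\<Sum>A\<in>Pow F. 2 * (X A)^4 + 12 * (c x)^2 * (X A)^2 + 2 * (c x)^4)"
      by (intro sum.cong) (simp_all add: power4_eq_xxxx power2_eq_square algebra_simps)
    also have "\<dots> = 2 * (\<Sum>A\<in>Pow F. (X A)^4) + 12 * (c x)^2 * (\<Sum>A\<in>Pow F. (X A)^2)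
        + 2 ^ card F * (2 * (c x)^4)"
      using card by (simp add: sum.distrib sum_distrib_left)
    also have "\<dots> \<le> 2 * (3 * 2 ^ card F * s^2) + 12 * (c x)^2 * (2 ^ card F * s) + 2 ^ card F * (2 * (c x)^4)"
      using insert.IH unfolding s_def X_def by simp
    also have "\<dots> \<le> 3 * (2 * 2 ^ card F) * ((c x)^2 + s)^2"
    proof -
      have "3 * (2 * 2 ^ card F) * ((c x)^2 + s)^2 - (2 * (3 * 2 ^ card F * s^2)
          + 12 * (c x)^2 * (2 ^ card F * s) + 2 ^ card F * (2 * (c x)^4)) = 2 ^ card F * (4 * (c x)^4)"
        by (simp add: power2_eq_square power4_eq_xxxx algebra_simps)
      moreover have "2 ^ card F * (4 * (c x)^4) \<ge> (0::real)"
        by simp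
      ultimately show ?thesis by linarith
    qed
    finally show ?case using insert unfolding s_def by simp
  }
qed

lemma abs_ge_quartic:
  fixes x M :: real
  assumes "M > 0"
  shows "\<bar>x\<bar> \<ge> 3/2 * x^2 / M - x^4 / (2 * M^3)"
proof -
  have "\<bar>x\<bar> * ((\<bar>x\<bar> - M)^2 * (\<bar>x\<bar> + 2 * M)) \<ge> 0"
    using assms by simp
  moreover have "\<bar>x\<bar> * ((\<bar>x\<bar> - M)^2 * (\<bar>x\<bar> + 2 * M)) = 2 * M^3 * \<bar>x\<bar> - 3 * M^2 * x^2 + x^4"
    by (simp add: power2_eq_square power3_eq_cube power4_eq_xxxx algebra_simps)
  ultimately have "(3 * M^2 * x^2 - x^4) / (2 * M^3) \<le> (2 * M^3 * \<bar>x\<bar>) / (2 * M^3)"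
    using assms by (intro divide_right_mono) auto
  moreover have "3/2 * x^2 / M - x^4 / (2 * M^3) = (3 * M^2 * x^2 - x^4) / (2 * M^3)"
    using assms by (simp add: field_simps power2_eq_square power3_eq_cube)
  ultimately show ?thesis using assms by simp
qed

text \<open>A weak Khintchine inequality, derived from the second and fourth moments; \<open>M\<close> is any upper
  bound for twice the standard deviation \<open>sqrt (\<Sum>t\<in>I. (c t)^2)\<close>.\<close>

lemma khintchine_lower:
  assumes I: "finite I" and M: "M > 0" and small: "(\<Sum>t\<in>I. (c t)^2) \<le> M^2 / 4"
  shows "(\<Sum>A\<in>Pow I. \<bar>rademacher_sum I c A\<bar>) \<ge> 2 ^ card I * (9/8 * (\<Sum>t\<in>I. (c t)^2) / M)"
proof -
  define s where "s = (\<Sum>t\<in>I. (c t)^2)"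
  have s0: "s \<ge> 0" unfolding s_def by (simp add: sum_nonneg)
  have "3/2 / M * (2 ^ card I * s) - (3 * 2 ^ card I * s^2) / (2 * M^3)
      \<le> 3/2 / M * (\<Sum>A\<in>Pow I. (rademacher_sum I c A)^2)
          - (\<Sum>A\<in>Pow I. (rademacher_sum I c A)^4) / (2 * M^3)"
    using rademacher_sum_moments[OF I, of c] M unfolding s_def
    by (intro diff_mono divide_right_mono) auto
  also have "\<dots> = (\<Sum>A\<in>Pow I. 3/2 * (rademacher_sum I c A)^2 / M - (rademacher_sum I c A)^4 / (2 * M^3))"
    by (simp add: sum_subtractf sum_distrib_left sum_divide_distrib)
  also have "\<dots> \<le> (\<Sum>A\<in>Pow I. \<bar>rademacher_sum I c A\<bar>)"
    by (intro sum_mono abs_ge_quartic M)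
  finally have moments: "3/2 / M * (2 ^ card I * s) - (3 * 2 ^ card I * s^2) / (2 * M^3)
      \<le> (\<Sum>A\<in>Pow I. \<bar>rademacher_sum I c A\<bar>)" .
  have "s^2 \<le> s * (M^2/4)"
    using small s0 unfolding s_def power2_eq_square by (intro mult_left_mono) auto
  then have "(3 * 2 ^ card I * s^2) / (2 * M^3) \<le> (3 * 2 ^ card I * (s * (M^2/4))) / (2 * M^3)"
    using M by (intro divide_right_mono mult_left_mono) auto
  also have "\<dots> = 2 ^ card I * (3/8 * s / M)"
    using M by (simp add: field_simps power2_eq_square power3_eq_cube)
  finally show ?thesis
    using moments unfolding s_def[symmetric] by (simp add: field_simps)
qed


section \<open>Offsets and paired swaps\<close>

definition offset :: "nat \<Rightarrow> real \<Rightarrow> nat \<Rightarrow> real" where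
  "offset m \<nu> k = (if k < m then \<nu> else if k < 2 * m then - \<nu> else 0)"

definition swap_pairs :: "nat \<Rightarrow> nat set \<Rightarrow> nat \<Rightarrow> nat" where
  "swap_pairs m A k =
     (if k < m \<and> k \<in> A then k + m else if m \<le> k \<and> k < 2 * m \<and> k - m \<in> A then k - m else k)"

definition pair_prefix :: "nat \<Rightarrow> real \<Rightarrow> (nat \<Rightarrow> nat) \<Rightarrow> nat \<Rightarrow> nat \<Rightarrow> real" where
  "pair_prefix m \<nu> \<sigma> i t = \<nu> * (of_bool (inv \<sigma> t < i) - of_bool (inv \<sigma> (m + t) < i))"

lemma sum_offset: "2 * m \<le> n \<Longrightarrow> (\<Sum>k<n. offset m \<nu> k) = 0"
proof -
  assume "2 * m \<le> n"
  then have "(\<Sum>k<n. offset m \<nu> k)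
      = (\<Sum>k\<in>{0..<m}. offset m \<nu> k) + (\<Sum>k\<in>{m..<2*m}. offset m \<nu> k) + (\<Sum>k\<in>{2*m..<n}. offset m \<nu> k)"
    by (simp add: sum.atLeastLessThan_concat atLeast0LessThan[symmetric])
  then show ?thesis unfolding offset_def by simp
qed

lemma abs_offset_le: "\<nu> \<ge> 0 \<Longrightarrow> \<bar>offset m \<nu> k\<bar> \<le> \<nu>"
  unfolding offset_def by auto

lemma permutes_swap_pairs:
  assumes "2 * m \<le> n"
  shows "swap_pairs m A permutes {..<n}"
proof (rule bij_imp_permutes)
  show "bij_betw (swap_pairs m A) {..<n} {..<n}"
    by (rule bij_betw_byWitness[where f'="swap_pairs m A"])
       (use assms in \<open>auto simp: swap_pairs_def\<close>)
qed (use assms in \<open>auto simp: swap_pairs_def\<close>)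

lemma offset_swap_pairs:
  "offset m \<nu> (swap_pairs m A k)
     = (\<Sum>t<m. (if t \<in> A then - 1 else 1) * (\<nu> * (of_bool (k = t) - of_bool (k = m + t))))"
proof -
  define s where "s t = (if t \<in> A then - \<nu> else \<nu>)" for t
  have "(\<Sum>t<m. (if t \<in> A then - 1 else 1) * (\<nu> * (of_bool (k = t) - of_bool (k = m + t))))
      = (\<Sum>t<m. if t = k then s t else 0) - (\<Sum>t<m. if m \<le> k \<and> t = k - m then s t else 0)"
    unfolding s_def sum_subtractf[symmetric] by (intro sum.cong) auto
  also have "\<dots> = (if k < m then s k else 0) - (if m \<le> k \<and> k - m < m then s (k - m) else 0)"
    by (cases "m \<le> k") simp_all
  also have "\<dots> = offset m \<nu> (swap_pairs m A k)"
    unfolding s_def offset_def swap_pairs_def by auto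
  finally show ?thesis ..
qed

lemma sum_of_bool_permutes_eq:
  fixes \<sigma> :: "nat \<Rightarrow> nat"
  assumes "\<sigma> permutes S"
  shows "(\<Sum>j<i. of_bool (\<sigma> j = t)) = (of_bool (inv \<sigma> t < i) :: real)"
proof -
  have "\<sigma> j = t \<longleftrightarrow> j = inv \<sigma> t" for j
    using permutes_inv_eq[OF assms, of t j] by auto
  then show ?thesis
    unfolding of_bool_def by (simp add: sum.delta)
qed

text \<open>Composing a permutation with \<open>swap_pairs m A\<close> flips the signs of the pairs in \<open>A\<close>;
  this turns every prefix sum of the shuffled offsets into a Rademacher sum.\<close>

lemma prefix_sum_swap_pairs:
  assumes "\<sigma> permutes S"
  shows "(\<Sum>j<i. offset m \<nu> (swap_pairs m A (\<sigma> j))) = rademacher_sum {..<m} (pair_prefix m \<nu> \<sigma> i) A"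
proof -
  have "(\<Sum>j<i. offset m \<nu> (swap_pairs m A (\<sigma> j)))
      = (\<Sum>t<m. (if t \<in> A then - 1 else 1)
           * (\<nu> * ((\<Sum>j<i. of_bool (\<sigma> j = t)) - (\<Sum>j<i. of_bool (\<sigma> j = m + t)))))"
    unfolding offset_swap_pairs
    by (subst sum.swap)
       (simp add: sum_distrib_left sum_subtractf right_diff_distrib
         del: sum_of_bool_eq sum_mult_of_bool_eq sum_of_bool_mult_eq)
  then show ?thesis
    unfolding rademacher_sum_def pair_prefix_def sum_of_bool_permutes_eq[OF assms] .
qed

lemma pair_prefix_sq_le: "(pair_prefix m \<nu> \<sigma> i t)^2 \<le> \<nu>^2"
  unfolding pair_prefix_def by (auto simp: power2_eq_square)

lemma sum_of_bool_between:
  fixes p q n :: nat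
  assumes "p < n" "q < n"
  shows "(\<Sum>i<n. of_bool ((p < i) \<noteq> (q < i))) = \<bar>real p - real q\<bar>"
proof -
  have "{..<n} \<inter> {i. (p < i) \<noteq> (q < i)} = {min p q<..max p q}"
    using assms by auto
  then have "(\<Sum>i<n. of_bool ((p < i) \<noteq> (q < i))) = real (card {min p q<..max p q})"
    by (simp del: Int_Collect)
  also have "real (card {min p q<..max p q}) = \<bar>real p - real q\<bar>"
    by (cases "p \<le> q") (auto simp: min_def max_def of_nat_diff)
  finally show ?thesis .
qed

lemma sum_pair_prefix_sq:
  assumes \<sigma>: "\<sigma> permutes {..<n}" and "m + t < n"
  shows "(\<Sum>i<n. (pair_prefix m \<nu> \<sigma> i t)^2) = \<nu>^2 * \<bar>real (inv \<sigma> t) - real (inv \<sigma> (m + t))\<bar>"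
proof -
  have inv_lt: "inv \<sigma> k < n" if "k < n" for k
    using permutes_in_image[OF permutes_inv[OF \<sigma>]] that by simp
  have "(\<Sum>i<n. (pair_prefix m \<nu> \<sigma> i t)^2)
      = (\<Sum>i<n. \<nu>^2 * of_bool ((inv \<sigma> t < i) \<noteq> (inv \<sigma> (m + t) < i)))"
    unfolding pair_prefix_def by (intro sum.cong) (auto simp: power2_eq_square)
  also have "\<dots> = \<nu>^2 * (\<Sum>i<n. of_bool ((inv \<sigma> t < i) \<noteq> (inv \<sigma> (m + t) < i)))"
    by (rule sum_distrib_left[symmetric])
  also have "\<dots> = \<nu>^2 * \<bar>real (inv \<sigma> t) - real (inv \<sigma> (m + t))\<bar>"
    using assms by (subst sum_of_bool_between) (auto intro: inv_lt)
  finally show ?thesis .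
qed


section \<open>How far apart the two members of a pair land\<close>

definition pair_gaps :: "nat \<Rightarrow> (nat \<Rightarrow> nat) \<Rightarrow> real" where
  "pair_gaps m \<sigma> = (\<Sum>t<m. \<bar>real (inv \<sigma> t) - real (inv \<sigma> (m + t))\<bar>)"

lemma exists_far_elem:
  fixes Q :: "nat set"
  assumes fin: "finite Q" and p: "p \<notin> Q" and ne: "Q \<noteq> {}"
  shows "\<exists>q\<in>Q. card Q \<le> 2 * \<bar>real p - real q\<bar>"
proof (rule ccontr)
  assume "\<not> ?thesis"
  then have near: "2 * \<bar>real p - real q\<bar> < card Q" if "q \<in> Q" for q
    using that by force
  define h where "h = (card Q - 1) div 2"
  have "Q \<subseteq> {p - h..<p} \<union> {p<..p + h}"
  proof
    fix q assume q: "q \<in> Q"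
    then have "q \<noteq> p" using p by auto
    moreover have "2 * (p - q) < card Q"
      using near[OF q] by (cases "q \<le> p") (auto simp: of_nat_diff)
    moreover have "2 * (q - p) < card Q"
      using near[OF q] by (cases "p \<le> q") (auto simp: of_nat_diff)
    ultimately show "q \<in> {p - h..<p} \<union> {p<..p + h}"
      unfolding h_def by auto
  qed
  then have "card Q \<le> card ({p - h..<p} \<union> {p<..p + h})"
    by (intro card_mono) auto
  also have "\<dots> \<le> h + h"
    using card_Un_le[of "{p - h..<p}" "{p<..p + h}"] by simp
  also have "\<dots> < card Q"
  proof -
    have "card Q > 0" using ne fin by (simp add: card_gt_0_iff)
    then show ?thesis unfolding h_def by presburger
  qed
  finally show False by simp
qed

lemma sum_dist_ge:
  fixes Q :: "nat set"
  assumes "finite Q" "p \<notin> Q"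
  shows "(\<Sum>q\<in>Q. \<bar>real p - real q\<bar>) \<ge> card Q * (card Q + 1) / 4"
  using assms
proof (induction "card Q" arbitrary: Q)
  case 0
  then show ?case by simp
next
  case (Suc k)
  then have "Q \<noteq> {}" by auto
  then obtain q0 where q0: "q0 \<in> Q" "card Q \<le> 2 * \<bar>real p - real q0\<bar>"
    using exists_far_elem[of Q p] Suc.prems by auto
  have "card (Q - {q0}) = k"
    using Suc.hyps(2) q0(1) Suc.prems by simp
  then have "(\<Sum>q\<in>Q - {q0}. \<bar>real p - real q\<bar>) \<ge> k * (k + 1) / 4"
    using Suc.hyps(1)[of "Q - {q0}"] Suc.prems by auto
  moreover have "(\<Sum>q\<in>Q. \<bar>real p - real q\<bar>) = \<bar>real p - real q0\<bar> + (\<Sum>q\<in>Q - {q0}. \<bar>real p - real q\<bar>)"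
    using Suc.prems q0(1) by (simp add: sum.remove)
  ultimately show ?case
    using q0(2) \<open>Suc k = card Q\<close>[symmetric] by (simp add: field_simps)
qed

lemma sum_dist_to_partners_ge:
  fixes \<sigma> :: "nat \<Rightarrow> nat"
  assumes \<sigma>: "\<sigma> permutes S" and "t < m"
  shows "(\<Sum>u<m. \<bar>real (inv \<sigma> t) - real (inv \<sigma> (m + u))\<bar>) \<ge> m * (m + 1) / 4"
proof -
  have inj: "inj (inv \<sigma>)"
    using permutes_inv[OF \<sigma>] by (rule permutes_inj)
  then have inj_partners: "inj_on (\<lambda>u. inv \<sigma> (m + u)) {..<m}"
    by (intro inj_onI) (simp add: inj_eq)
  have "inv \<sigma> t \<notin> (\<lambda>u. inv \<sigma> (m + u)) ` {..<m}"
    using inj \<open>t < m\<close> by (auto dest: injD)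
  then have "(\<Sum>q\<in>(\<lambda>u. inv \<sigma> (m + u)) ` {..<m}. \<bar>real (inv \<sigma> t) - real q\<bar>)
      \<ge> card ((\<lambda>u. inv \<sigma> (m + u)) ` {..<m}) * (card ((\<lambda>u. inv \<sigma> (m + u)) ` {..<m}) + 1) / 4"
    by (intro sum_dist_ge) auto
  then show ?thesis
    unfolding sum.reindex[OF inj_partners] card_image[OF inj_partners] by (simp add: algebra_simps)
qed

lemma sum_permutations_pair_gap_eq:
  assumes "2 * m \<le> n" "t < m" "u < m"
  shows "(\<Sum>\<sigma>\<in>{\<sigma>. \<sigma> permutes {..<n}}. \<bar>real (inv \<sigma> t) - real (inv \<sigma> (m + t))\<bar>)
       = (\<Sum>\<sigma>\<in>{\<sigma>. \<sigma> permutes {..<n}}. \<bar>real (inv \<sigma> t) - real (inv \<sigma> (m + u))\<bar>)"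
proof -
  define \<kappa> where "\<kappa> = Transposition.transpose (m + t) (m + u)"
  have \<kappa>: "\<kappa> permutes {..<n}"
    unfolding \<kappa>_def using assms by (intro permutes_swap_id) auto
  have "(\<Sum>\<sigma>\<in>{\<sigma>. \<sigma> permutes {..<n}}. \<bar>real (inv \<sigma> t) - real (inv \<sigma> (m + t))\<bar>)
     = (\<Sum>\<sigma>\<in>{\<sigma>. \<sigma> permutes {..<n}}. \<bar>real (inv (\<kappa> \<circ> \<sigma>) t) - real (inv (\<kappa> \<circ> \<sigma>) (m + t))\<bar>)"
    by (rule setum_permutations_compose_left[OF \<kappa>])
  also have "\<dots> = (\<Sum>\<sigma>\<in>{\<sigma>. \<sigma> permutes {..<n}}. \<bar>real (inv \<sigma> t) - real (inv \<sigma> (m + u))\<bar>)"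
  proof (rule sum.cong)
    fix \<sigma> assume "\<sigma> \<in> {\<sigma>. \<sigma> permutes {..<n}}"
    then have "inv (\<kappa> \<circ> \<sigma>) = inv \<sigma> \<circ> \<kappa>"
      using o_inv_distrib[OF permutes_bij[OF \<kappa>] permutes_bij] unfolding \<kappa>_def by simp
    moreover have "\<kappa> t = t" "\<kappa> (m + t) = m + u"
      unfolding \<kappa>_def using \<open>t < m\<close> by auto
    ultimately show "\<bar>real (inv (\<kappa> \<circ> \<sigma>) t) - real (inv (\<kappa> \<circ> \<sigma>) (m + t))\<bar>
        = \<bar>real (inv \<sigma> t) - real (inv \<sigma> (m + u))\<bar>" by simp
  qed simp
  finally show ?thesis .
qed

lemma sum_permutations_pair_gaps_ge:
  assumes "2 * m \<le> n"
  shows "(\<Sum>\<sigma>\<in>{\<sigma>. \<sigma> permutes {..<n}}. pair_gaps m \<sigma>)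
           \<ge> card {\<sigma>. \<sigma> permutes {..<n}} * (m * (m + 1) / 4)"
proof -
  define P where "P = {\<sigma>::nat \<Rightarrow> nat. \<sigma> permutes {..<n}}"
  have gap: "(\<Sum>\<sigma>\<in>P. \<bar>real (inv \<sigma> t) - real (inv \<sigma> (m + t))\<bar>) \<ge> card P * ((m + 1) / 4)"
    if t: "t < m" for t
  proof -
    have "m * (card P * ((m + 1) / 4)) = (\<Sum>\<sigma>\<in>P. m * (m + 1) / 4)"
      by (simp add: field_simps)
    also have "\<dots> \<le> (\<Sum>\<sigma>\<in>P. \<Sum>u<m. \<bar>real (inv \<sigma> t) - real (inv \<sigma> (m + u))\<bar>)"
      unfolding P_def by (intro sum_mono) (use sum_dist_to_partners_ge[OF _ t] in \<open>auto simp: algebra_simps\<close>)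
    also have "\<dots> = (\<Sum>u<m. \<Sum>\<sigma>\<in>P. \<bar>real (inv \<sigma> t) - real (inv \<sigma> (m + t))\<bar>)"
      unfolding P_def using assms t by (subst sum.swap) (simp add: sum_permutations_pair_gap_eq)
    also have "\<dots> = m * (\<Sum>\<sigma>\<in>P. \<bar>real (inv \<sigma> t) - real (inv \<sigma> (m + t))\<bar>)"
      by simp
    finally show ?thesis using t by simp
  qed
  have "(\<Sum>\<sigma>\<in>P. pair_gaps m \<sigma>) = (\<Sum>t<m. \<Sum>\<sigma>\<in>P. \<bar>real (inv \<sigma> t) - real (inv \<sigma> (m + t))\<bar>)"
    unfolding pair_gaps_def by (rule sum.swap)
  also have "\<dots> \<ge> (\<Sum>t<m. card P * ((m + 1) / 4))"
    by (intro sum_mono gap) auto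
  also have "(\<Sum>t<m. card P * ((m + 1) / 4)) = card P * (real m * (real m + 1) / 4)"
    by (simp add: field_simps)
  finally show ?thesis unfolding P_def .
qed


section \<open>One epoch averaged over the shuffle\<close>

text \<open>The constant collects \<open>5/32\<close> from \<open>pass_lb_antipodal\<close>, \<open>9/16\<close> from the Khintchine bound and
  \<open>m (m + 1) / 4\<close> from the expected distance between partners.\<close>

definition epoch_gain :: "real \<Rightarrow> real \<Rightarrow> real \<Rightarrow> nat \<Rightarrow> real" where
  "epoch_gain L \<eta> \<nu> m = 45/2048 * \<eta>^2 * L * \<nu> * (real m * (real m + 1)) / sqrt m"

lemma sum_abs_rademacher_prefix_ge:
  fixes \<sigma> :: "nat \<Rightarrow> nat"
  assumes m: "m \<ge> 1" and mn: "2 * m \<le> n" and nu: "\<nu> > 0" and \<sigma>: "\<sigma> permutes {..<n}"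
  shows "(\<Sum>A\<in>Pow {..<m}. \<Sum>i<n. \<bar>rademacher_sum {..<m} (pair_prefix m \<nu> \<sigma> i) A\<bar>)
           \<ge> 2 ^ m * (9/16 * \<nu> * pair_gaps m \<sigma> / sqrt m)"
proof -
  define M where "M = 2 * \<nu> * sqrt m"
  define s where "s i = (\<Sum>t<m. (pair_prefix m \<nu> \<sigma> i t)^2)" for i
  have M: "M > 0" unfolding M_def using nu m by auto
  have khintchine: "2 ^ m * (9/8 * s i / M) \<le> (\<Sum>A\<in>Pow {..<m}. \<bar>rademacher_sum {..<m} (pair_prefix m \<nu> \<sigma> i) A\<bar>)"
    for i
  proof -
    have "s i \<le> (\<Sum>t<m. \<nu>^2)"
      unfolding s_def by (intro sum_mono pair_prefix_sq_le)
    also have "\<dots> = M^2 / 4"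
      unfolding M_def using m by (simp add: power2_eq_square)
    finally show ?thesis
      using khintchine_lower[of "{..<m}" M] M unfolding s_def by simp
  qed
  have "(\<Sum>i<n. s i) = \<nu>^2 * pair_gaps m \<sigma>"
    unfolding s_def pair_gaps_def sum_distrib_left using mn
    by (subst sum.swap) (intro sum.cong refl sum_pair_prefix_sq[OF \<sigma>]; simp)
  then have "2 ^ m * (9/16 * \<nu> * pair_gaps m \<sigma> / sqrt m) = 2 ^ m * (9/8) / M * (\<Sum>i<n. s i)"
    unfolding M_def using nu m by (simp add: field_simps power2_eq_square)
  also have "\<dots> = (\<Sum>i<n. 2 ^ m * (9/8 * s i / M))"
    unfolding sum_distrib_left by (intro sum.cong) auto
  also have "\<dots> \<le> (\<Sum>i<n. \<Sum>A\<in>Pow {..<m}. \<bar>rademacher_sum {..<m} (pair_prefix m \<nu> \<sigma> i) A\<bar>)"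
    by (intro sum_mono khintchine)
  also have "\<dots> = (\<Sum>A\<in>Pow {..<m}. \<Sum>i<n. \<bar>rademacher_sum {..<m} (pair_prefix m \<nu> \<sigma> i) A\<bar>)"
    by (rule sum.swap)
  finally show ?thesis .
qed

lemma sum_swap_pairs_kink_pass_ge:
  fixes \<sigma> :: "nat \<Rightarrow> nat"
  assumes m: "m \<ge> 1" and mn: "2 * m \<le> n" and L: "L > 0" and eta: "\<eta> > 0" and nu: "\<nu> > 0"
    and small: "\<eta> * L * n \<le> 1/64" and \<sigma>: "\<sigma> permutes {..<n}"
  shows "(\<Sum>A\<in>Pow {..<m}. kink_pass L \<eta> (\<lambda>j. offset m \<nu> (swap_pairs m A (\<sigma> j))) y n)
           \<ge> 2 ^ m * ((1 - epoch_rate L \<eta> n) * y + 45/512 * \<eta>^2 * L * \<nu> * pair_gaps m \<sigma> / sqrt m)"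
proof -
  define S where "S A i = (\<Sum>j<i. offset m \<nu> (swap_pairs m A (\<sigma> j)))" for A i
  have S_eq: "S A i = rademacher_sum {..<m} (pair_prefix m \<nu> \<sigma> i) A" for A i
    unfolding S_def by (rule prefix_sum_swap_pairs[OF \<sigma>])
  have pass: "pass_lb L \<eta> n y (S A) \<le> kink_pass L \<eta> (\<lambda>j. offset m \<nu> (swap_pairs m A (\<sigma> j))) y n" for A
  proof -
    have "swap_pairs m A \<circ> \<sigma> permutes {..<n}"
      by (intro permutes_compose \<sigma> permutes_swap_pairs mn)
    then have "(\<Sum>j<n. offset m \<nu> (swap_pairs m A (\<sigma> j))) = (\<Sum>j<n. offset m \<nu> j)"
      using sum.permute[of _ "{..<n}" "offset m \<nu>"] by (simp add: o_def)
    then have "(\<Sum>j<n. offset m \<nu> (swap_pairs m A (\<sigma> j))) = 0"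
      using sum_offset[OF mn] by simp
    then show ?thesis
      unfolding S_def using small by (intro kink_pass_ge_pass_lb[OF L eta]) auto
  qed
  have "card (Pow {..<m}) * ((1 - epoch_rate L \<eta> n) * y)
      + 5/32 * \<eta>^2 * L * (\<Sum>A\<in>Pow {..<m}. \<Sum>i<n. \<bar>S A i\<bar>)
      \<le> (\<Sum>A\<in>Pow {..<m}. pass_lb L \<eta> n y (S A))"
    using L eta small
    by (intro sum_pass_lb_involution[where c="\<lambda>A. {..<m} - A"]) (auto simp: S_eq rademacher_sum_Diff)
  also have "\<dots> \<le> (\<Sum>A\<in>Pow {..<m}. kink_pass L \<eta> (\<lambda>j. offset m \<nu> (swap_pairs m A (\<sigma> j))) y n)"
    by (intro sum_mono pass)
  finally have lower: "2 ^ m * ((1 - epoch_rate L \<eta> n) * y)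
      + 5/32 * \<eta>^2 * L * (\<Sum>A\<in>Pow {..<m}. \<Sum>i<n. \<bar>S A i\<bar>)
      \<le> (\<Sum>A\<in>Pow {..<m}. kink_pass L \<eta> (\<lambda>j. offset m \<nu> (swap_pairs m A (\<sigma> j))) y n)"
    by (simp add: card_Pow)
  have "5/32 * \<eta>^2 * L * (2 ^ m * (9/16 * \<nu> * pair_gaps m \<sigma> / sqrt m))
      \<le> 5/32 * \<eta>^2 * L * (\<Sum>A\<in>Pow {..<m}. \<Sum>i<n. \<bar>S A i\<bar>)"
    unfolding S_eq using sum_abs_rademacher_prefix_ge[OF m mn nu \<sigma>] L
    by (intro mult_left_mono) auto
  with lower show ?thesis
    by (simp add: algebra_simps)
qed

lemma sum_permutations_kink_pass_ge:
  assumes m: "m \<ge> 1" and mn: "2 * m \<le> n" and L: "L > 0" and eta: "\<eta> > 0" and nu: "\<nu> > 0"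
    and small: "\<eta> * L * n \<le> 1/64"
  shows "(\<Sum>\<sigma>\<in>{\<sigma>. \<sigma> permutes {..<n}}. kink_pass L \<eta> (\<lambda>j. offset m \<nu> (\<sigma> j)) y n)
           \<ge> card {\<sigma>. \<sigma> permutes {..<n}} * ((1 - epoch_rate L \<eta> n) * y + epoch_gain L \<eta> \<nu> m)"
proof -
  define P where "P = {\<sigma>::nat \<Rightarrow> nat. \<sigma> permutes {..<n}}"
  define F where "F \<sigma> = kink_pass L \<eta> (\<lambda>j. offset m \<nu> (\<sigma> j)) y n" for \<sigma>
  define \<kappa> where "\<kappa> = 45/512 * \<eta>^2 * L * \<nu> / sqrt m"
  have \<kappa>: "\<kappa> \<ge> 0" unfolding \<kappa>_def using L nu by simp
  have "2 ^ m * (card P * ((1 - epoch_rate L \<eta> n) * y + epoch_gain L \<eta> \<nu> m))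
      = 2 ^ m * (card P * ((1 - epoch_rate L \<eta> n) * y) + \<kappa> * (card P * (real m * (real m + 1) / 4)))"
    unfolding epoch_gain_def \<kappa>_def by (simp add: field_simps)
  also have "\<dots> \<le> 2 ^ m * (card P * ((1 - epoch_rate L \<eta> n) * y) + \<kappa> * (\<Sum>\<sigma>\<in>P. pair_gaps m \<sigma>))"
    using sum_permutations_pair_gaps_ge[OF mn] \<kappa> unfolding P_def
    by (intro mult_left_mono add_left_mono) auto
  also have "\<dots> = (\<Sum>\<sigma>\<in>P. 2 ^ m * ((1 - epoch_rate L \<eta> n) * y + \<kappa> * pair_gaps m \<sigma>))"
    by (simp add: sum.distrib sum_distrib_left distrib_left ac_simps)
  also have "\<dots> \<le> (\<Sum>\<sigma>\<in>P. \<Sum>A\<in>Pow {..<m}. F (swap_pairs m A \<circ> \<sigma>))"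
    unfolding P_def F_def \<kappa>_def
    by (intro sum_mono) (use sum_swap_pairs_kink_pass_ge[OF m mn L eta nu small] in \<open>simp add: o_def\<close>)
  also have "\<dots> = (\<Sum>A\<in>Pow {..<m}. \<Sum>\<sigma>\<in>P. F (swap_pairs m A \<circ> \<sigma>))"
    by (rule sum.swap)
  also have "\<dots> = 2 ^ m * (\<Sum>\<sigma>\<in>P. F \<sigma>)"
    unfolding P_def using setum_permutations_compose_left[OF permutes_swap_pairs[OF mn], of F]
    by (simp add: card_Pow)
  finally show ?thesis
    unfolding P_def F_def by simp
qed


section \<open>Many epochs\<close>

fun kink_epochs ::
  "real \<Rightarrow> real \<Rightarrow> nat \<Rightarrow> real \<Rightarrow> nat \<Rightarrow> (nat \<Rightarrow> nat \<Rightarrow> nat) \<Rightarrow> real \<Rightarrow> nat \<Rightarrow> real" where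
  "kink_epochs L \<eta> m \<nu> n s y 0 = y"
| "kink_epochs L \<eta> m \<nu> n s y (Suc k) =
     kink_pass L \<eta> (\<lambda>j. offset m \<nu> (s (Suc k) j)) (kink_epochs L \<eta> m \<nu> n s y k) n"

lemma kink_epochs_cong:
  "(\<And>i. 1 \<le> i \<Longrightarrow> i \<le> k \<Longrightarrow> s i = s' i) \<Longrightarrow> kink_epochs L \<eta> m \<nu> n s y k = kink_epochs L \<eta> m \<nu> n s' y k"
  by (induction k) auto

lemma sum_PiE_split:
  assumes "finite I" "a \<in> I" "\<And>i. finite (B i)"
  shows "(\<Sum>s\<in>PiE I B. h s) = (\<Sum>x\<in>B a. \<Sum>g\<in>PiE (I - {a}) B. h (g(a := x)))"
proof -
  have "PiE I B = (\<lambda>(x, g). g(a := x)) ` (B a \<times> PiE (I - {a}) B)"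
    using PiE_insert_eq[of a "I - {a}" B] assms(2) by (simp add: insert_absorb)
  then have "(\<Sum>s\<in>PiE I B. h s) = (\<Sum>p\<in>B a \<times> PiE (I - {a}) B. h ((\<lambda>(x, g). g(a := x)) p))"
    using sum.reindex[OF inj_combinator[of a "I - {a}" B]] by (simp add: o_def)
  also have "\<dots> = (\<Sum>(x, g)\<in>B a \<times> PiE (I - {a}) B. h (g(a := x)))"
    by (intro sum.cong) auto
  also have "\<dots> = (\<Sum>x\<in>B a. \<Sum>g\<in>PiE (I - {a}) B. h (g(a := x)))"
    by (rule sum.cartesian_product[symmetric])
  finally show ?thesis .
qed

lemma card_perm_seqs: "card (perm_seqs n K) = card {\<sigma>::nat \<Rightarrow> nat. \<sigma> permutes {..<n}} ^ K"
  unfolding perm_seqs_def by (simp add: card_PiE finite_permutations)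

lemma card_perm_seqs_pos: "card (perm_seqs n K) > 0"
proof -
  have "{\<sigma>::nat \<Rightarrow> nat. \<sigma> permutes {..<n}} \<noteq> {}"
    using permutes_id by blast
  then show ?thesis
    unfolding card_perm_seqs by (simp add: card_gt_0_iff finite_permutations)
qed

lemma sum_kink_epochs_Suc_ge:
  assumes m: "m \<ge> 1" and mn: "2 * m \<le> n" and L: "L > 0" and eta: "\<eta> > 0" and nu: "\<nu> > 0"
    and small: "\<eta> * L * n \<le> 1/64" and j: "j < K"
  shows "(\<Sum>s\<in>perm_seqs n K. kink_epochs L \<eta> m \<nu> n s y (Suc j))
     \<ge> (1 - epoch_rate L \<eta> n) * (\<Sum>s\<in>perm_seqs n K. kink_epochs L \<eta> m \<nu> n s y j)
       + card (perm_seqs n K) * epoch_gain L \<eta> \<nu> m"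
proof -
  define P where "P = {\<sigma>::nat \<Rightarrow> nat. \<sigma> permutes {..<n}}"
  define G where "G = PiE ({1..K} - {Suc j}) (\<lambda>_. P)"
  define Y where "Y g = kink_epochs L \<eta> m \<nu> n g y j" for g
  have finP: "finite P" unfolding P_def by (simp add: finite_permutations)
  have split: "(\<Sum>s\<in>perm_seqs n K. h s) = (\<Sum>\<sigma>\<in>P. \<Sum>g\<in>G. h (g(Suc j := \<sigma>)))" for h :: "_ \<Rightarrow> real"
    unfolding perm_seqs_def G_def P_def using j finP by (intro sum_PiE_split) (auto simp: P_def)
  have earlier: "kink_epochs L \<eta> m \<nu> n (g(Suc j := \<sigma>)) y j = Y g" for g \<sigma>
    unfolding Y_def by (rule kink_epochs_cong) auto
  have card: "card (perm_seqs n K) = card P * card G"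
    using j finP unfolding card_perm_seqs G_def P_def
    by (simp add: card_PiE card_Diff_singleton power_Suc[symmetric] Suc_diff_Suc del: power_Suc)
  have "(\<Sum>s\<in>perm_seqs n K. kink_epochs L \<eta> m \<nu> n s y (Suc j))
      = (\<Sum>g\<in>G. \<Sum>\<sigma>\<in>P. kink_pass L \<eta> (\<lambda>i. offset m \<nu> (\<sigma> i)) (Y g) n)"
    unfolding split by (subst sum.swap) (simp add: earlier)
  also have "\<dots> \<ge> (\<Sum>g\<in>G. card P * ((1 - epoch_rate L \<eta> n) * Y g + epoch_gain L \<eta> \<nu> m))"
    unfolding P_def by (intro sum_mono sum_permutations_kink_pass_ge[OF m mn L eta nu small])
  also have "(\<Sum>g\<in>G. card P * ((1 - epoch_rate L \<eta> n) * Y g + epoch_gain L \<eta> \<nu> m))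
      = (\<Sum>g\<in>G. ((1 - epoch_rate L \<eta> n) * card P) * Y g + card P * epoch_gain L \<eta> \<nu> m)"
    by (intro sum.cong) (simp_all add: algebra_simps)
  also have "\<dots> = (1 - epoch_rate L \<eta> n) * (card P * (\<Sum>g\<in>G. Y g))
      + card P * card G * epoch_gain L \<eta> \<nu> m"
    by (simp add: sum.distrib sum_distrib_left[symmetric])
  also have "card P * (\<Sum>g\<in>G. Y g) = (\<Sum>s\<in>perm_seqs n K. kink_epochs L \<eta> m \<nu> n s y j)"
    unfolding split by (simp add: earlier)
  finally show ?thesis unfolding card by simp
qed

lemma epoch_rate_bounds:
  assumes "0 < \<eta> * L * n" "\<eta> * L * n \<le> 1/64"
  shows "0 < epoch_rate L \<eta> n" "3/4 * (\<eta> * L * n) \<le> epoch_rate L \<eta> n"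
    "epoch_rate L \<eta> n \<le> \<eta> * L * n"
proof -
  have "(\<eta> * L * n) * (\<eta> * L * n) \<le> (\<eta> * L * n) * (1/64)"
    using assms by (intro mult_left_mono) auto
  then have "(\<eta> * L * n)^2 \<le> (\<eta> * L * n) / 64"
    by (simp add: power2_eq_square)
  then show "0 < epoch_rate L \<eta> n" "3/4 * (\<eta> * L * n) \<le> epoch_rate L \<eta> n"
    "epoch_rate L \<eta> n \<le> \<eta> * L * n"
    using assms unfolding epoch_rate_def by (simp_all add: add_pos_nonneg)
qed

lemma sum_kink_epochs_ge:
  assumes m: "m \<ge> 1" and mn: "2 * m \<le> n" and L: "L > 0" and eta: "\<eta> > 0" and nu: "\<nu> > 0"
    and small: "\<eta> * L * n \<le> 1/64" and "j \<le> K"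
  shows "(\<Sum>s\<in>perm_seqs n K. kink_epochs L \<eta> m \<nu> n s 0 j)
           \<ge> card (perm_seqs n K) * (epoch_gain L \<eta> \<nu> m * (\<Sum>i<j. (1 - epoch_rate L \<eta> n)^i))"
  using \<open>j \<le> K\<close>
proof (induction j)
  case 0
  then show ?case by simp
next
  case (Suc j)
  define \<rho> where "\<rho> = epoch_rate L \<eta> n"
  define N where "N = real (card (perm_seqs n K))"
  define C where "C = epoch_gain L \<eta> \<nu> m"
  have "\<rho> \<le> 1"
    using epoch_rate_bounds(3)[of \<eta> L n] m mn L eta small unfolding \<rho>_def by simp
  have "N * (C * (\<Sum>i<Suc j. (1 - \<rho>)^i)) = (1 - \<rho>) * (N * (C * (\<Sum>i<j. (1 - \<rho>)^i))) + N * C"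
    by (simp add: sum.lessThan_Suc_shift sum_distrib_left algebra_simps del: sum.lessThan_Suc)
  also have "\<dots> \<le> (1 - \<rho>) * (\<Sum>s\<in>perm_seqs n K. kink_epochs L \<eta> m \<nu> n s 0 j) + N * C"
    using \<open>\<rho> \<le> 1\<close> Suc unfolding \<rho>_def N_def C_def by (intro add_right_mono mult_left_mono) auto
  also have "\<dots> \<le> (\<Sum>s\<in>perm_seqs n K. kink_epochs L \<eta> m \<nu> n s 0 (Suc j))"
    using sum_kink_epochs_Suc_ge[OF m mn L eta nu small] Suc unfolding \<rho>_def N_def C_def by simp
  finally show ?case
    unfolding \<rho>_def N_def C_def .
qed


section \<open>The two-dimensional instance\<close>

definition hard_fn :: "real \<Rightarrow> real \<Rightarrow> real \<Rightarrow> real^2 \<Rightarrow> real" where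
  "hard_fn \<mu> L c x = \<mu>/2 * (x$1)^2 + kinked_quad L (x$2) + c * x$2"

definition hard_grad :: "real \<Rightarrow> real \<Rightarrow> real \<Rightarrow> real^2 \<Rightarrow> real^2" where
  "hard_grad \<mu> L c x = vector [\<mu> * x$1, kinked_quad_deriv L (x$2) + c]"

definition hard_comps :: "real \<Rightarrow> real \<Rightarrow> nat \<Rightarrow> real \<Rightarrow> nat \<Rightarrow> real^2 \<Rightarrow> real" where
  "hard_comps \<mu> L m \<nu> k = hard_fn \<mu> L (offset m \<nu> k)"

lemma inner_vec2: "(u::real^2) \<bullet> v = u$1 * v$1 + u$2 * v$2"
  unfolding inner_vec_def sum_2 by simp

lemma norm_vec2_sq: "(norm (v::real^2))^2 = (v$1)^2 + (v$2)^2"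
  unfolding power2_norm_eq_inner inner_vec2 by (simp add: power2_eq_square)

lemma has_derivative_vec_nth_comp:
  fixes x :: "real^'n"
  assumes "(g has_real_derivative D) (at (x$i))"
  shows "((\<lambda>x. g (x$i)) has_derivative (\<lambda>h. D * h$i)) (at x)"
proof -
  have "((\<lambda>x::real^'n. x$i) has_derivative (\<lambda>h. h$i)) (at x)"
    by (rule bounded_linear_imp_has_derivative) (rule bounded_linear_vec_nth)
  moreover have "(g has_derivative (\<lambda>h. D * h)) (at (x$i))"
    using assms by (simp add: has_field_derivative_def mult_commute_abs)
  ultimately show ?thesis
    using has_derivative_compose by fastforce
qed

lemma hard_fn_has_derivative: "(hard_fn \<mu> L c has_derivative (\<lambda>h. hard_grad \<mu> L c x \<bullet> h)) (at x)"
proof -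
  have sq: "(power2 has_real_derivative 2 * x$1) (at (x$1))"
    by (auto intro!: derivative_eq_intros)
  have lin: "((\<lambda>t. c * t) has_real_derivative c) (at (x$2))"
    by (auto intro!: derivative_eq_intros)
  have "((\<lambda>x::real^2. \<mu>/2 * (x$1)^2 + kinked_quad L (x$2) + c * x$2) has_derivative
      (\<lambda>h. \<mu>/2 * (2 * x$1 * h$1) + kinked_quad_deriv L (x$2) * h$2 + c * h$2)) (at x)"
    by (intro has_derivative_add has_derivative_mult_right has_derivative_vec_nth_comp[OF sq, simplified]
        has_derivative_vec_nth_comp[OF kinked_quad_has_real_derivative]
        has_derivative_vec_nth_comp[OF lin, simplified])
  moreover have "(\<lambda>h. \<mu>/2 * (2 * x$1 * h$1) + kinked_quad_deriv L (x$2) * h$2 + c * h$2)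
      = (\<lambda>h. hard_grad \<mu> L c x \<bullet> h)"
    unfolding hard_grad_def inner_vec2 by (auto simp: algebra_simps)
  ultimately show ?thesis
    unfolding hard_fn_def[abs_def] by simp
qed

lemma grad_eqI:
  fixes f :: "'a::real_inner \<Rightarrow> real"
  assumes "(f has_derivative (\<lambda>h. g \<bullet> h)) (at x)"
  shows "grad f x = g"
  unfolding grad_def
proof (rule some_equality)
  fix g' assume "(f has_derivative (\<lambda>h. g' \<bullet> h)) (at x)"
  then have "(\<lambda>h. g' \<bullet> h) = (\<lambda>h. g \<bullet> h)"
    using assms by (rule has_derivative_unique)
  then have "(g' - g) \<bullet> (g' - g) = 0"
    by (metis inner_diff_left inner_commute diff_self)
  then show "g' = g" by simp
qed (rule assms)

lemma grad_hard_fn: "grad (hard_fn \<mu> L c) x = hard_grad \<mu> L c x"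
  by (rule grad_eqI) (rule hard_fn_has_derivative)

lemma hard_grad_lipschitz:
  assumes "0 \<le> \<mu>" "\<mu> \<le> L"
  shows "norm (hard_grad \<mu> L c x - hard_grad \<mu> L c y) \<le> L * norm (x - y)"
proof (rule power2_le_imp_le)
  have "(\<mu> * (x$1 - y$1))^2 \<le> (L * (x$1 - y$1))^2"
    unfolding power_mult_distrib using assms by (intro mult_right_mono power_mono) auto
  moreover have "\<bar>kinked_quad_deriv L (x$2) - kinked_quad_deriv L (y$2)\<bar>^2 \<le> (L * \<bar>x$2 - y$2\<bar>)^2"
    using assms by (intro power_mono kinked_quad_deriv_lipschitz) auto
  then have "(kinked_quad_deriv L (x$2) - kinked_quad_deriv L (y$2))^2 \<le> (L * (x$2 - y$2))^2"
    using assms by (simp add: power2_abs abs_mult power_mult_distrib)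
  ultimately have "(norm (hard_grad \<mu> L c x - hard_grad \<mu> L c y))^2 \<le> (L * (x$1 - y$1))^2 + (L * (x$2 - y$2))^2"
    unfolding norm_vec2_sq hard_grad_def by (simp add: algebra_simps)
  also have "\<dots> = (L * norm (x - y))^2"
    unfolding power_mult_distrib norm_vec2_sq by (simp add: algebra_simps)
  finally show "(norm (hard_grad \<mu> L c x - hard_grad \<mu> L c y))^2 \<le> (L * norm (x - y))^2" .
qed (use assms in simp)

lemma convex_on_vec_nth:
  assumes "convex_on UNIV g"
  shows "convex_on UNIV (\<lambda>x::real^'n. g (x$i))"
proof (rule convex_onI)
  fix t :: real and x y :: "real^'n"
  assume "t > 0" "t < 1"
  then show "g (((1 - t) *\<^sub>R x + t *\<^sub>R y)$i) \<le> (1 - t) * g (x$i) + t * g (y$i)"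
    using convex_onD[OF assms, of t "x$i" "y$i"] by simp
qed simp

lemma convex_on_hard_fn:
  assumes "\<mu> \<ge> 0" "L \<ge> 0"
  shows "convex_on UNIV (hard_fn \<mu> L c)"
proof -
  have "convex_on UNIV (\<lambda>t::real. \<mu>/2 * t^2)"
    using assms convex_power2 by (intro convex_on_cmul) auto
  moreover have "convex_on UNIV (\<lambda>t::real. c * t)"
    by (rule convex_on_realI[where f'="\<lambda>_. c"]) (auto intro!: derivative_eq_intros)
  ultimately show ?thesis
    unfolding hard_fn_def[abs_def]
    by (intro convex_on_add convex_on_vec_nth convex_on_kinked_quad assms)
qed

lemma smooth_hard_fn:
  assumes "0 \<le> \<mu>" "\<mu> \<le> L"
  shows "smooth L (hard_fn \<mu> L c)"
  unfolding smooth_def grad_hard_fn using hard_grad_lipschitz[OF assms] hard_fn_has_derivative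
  by (auto simp: differentiable_def) blast

lemma Fsum_hard_comps:
  assumes "n > 0" "2 * m \<le> n"
  shows "Fsum n (hard_comps \<mu> L m \<nu>) = hard_fn \<mu> L 0"
proof
  fix x
  have "(\<Sum>k<n. hard_comps \<mu> L m \<nu> k x) = n * hard_fn \<mu> L 0 x + (\<Sum>k<n. offset m \<nu> k) * x$2"
    unfolding hard_comps_def hard_fn_def by (simp add: sum.distrib sum_distrib_right)
  then show "Fsum n (hard_comps \<mu> L m \<nu>) x = hard_fn \<mu> L 0 x"
    unfolding Fsum_def using assms sum_offset[OF assms(2)] by simp
qed

lemma hard_comps_fclass:
  assumes "n > 0" "2 * m \<le> n" and mu: "0 \<le> \<mu>" "\<mu> \<le> L" and nu: "\<nu> \<ge> 0"
  shows "fclass n L 0 0 \<nu> (hard_comps \<mu> L m \<nu>)"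
proof -
  have "norm (hard_grad \<mu> L (offset m \<nu> k) x - hard_grad \<mu> L 0 x) = \<bar>offset m \<nu> k\<bar>" for k x
    by (simp add: hard_grad_def norm_eq_sqrt_inner inner_vec2)
  then show ?thesis
    unfolding fclass_def strongly_convex_def Fsum_hard_comps[OF assms(1,2)]
    using smooth_hard_fn[OF mu] convex_on_hard_fn[of \<mu> L] mu abs_offset_le[OF nu]
    by (simp add: hard_comps_def grad_hard_fn)
qed

lemma hard_fn_nonneg: "L \<ge> 0 \<Longrightarrow> \<mu> \<ge> 0 \<Longrightarrow> hard_fn \<mu> L 0 x \<ge> 0"
  unfolding hard_fn_def using kinked_quad_nonneg[of L "x$2"] by simp

lemma hard_fn_0: "hard_fn \<mu> L 0 0 = 0"
  unfolding hard_fn_def kinked_quad_def by simp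

lemma INF_hard_fn:
  assumes "L \<ge> 0" "\<mu> \<ge> 0"
  shows "(INF x. hard_fn \<mu> L 0 x) = 0"
proof (rule cInf_eq_minimum)
  show "0 \<in> range (hard_fn \<mu> L 0)"
    using hard_fn_0[of \<mu> L] by (metis rangeI)
qed (use assms hard_fn_nonneg in auto)

lemma inner_iter_hard_comps:
  fixes x :: "real^2"
  shows "(inner_iter (hard_comps \<mu> L m \<nu>) \<eta> \<sigma> x i)$1 = (1 - \<eta> * \<mu>)^i * x$1"
    and "(inner_iter (hard_comps \<mu> L m \<nu>) \<eta> \<sigma> x i)$2 = kink_pass L \<eta> (\<lambda>j. offset m \<nu> (\<sigma> j)) (x$2) i"
  by (induction i) (simp_all add: hard_comps_def grad_hard_fn hard_grad_def algebra_simps)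

lemma epoch_start_hard_comps:
  fixes x :: "real^2"
  shows "(epoch_start n (hard_comps \<mu> L m \<nu>) \<eta> s x k)$1 = (1 - \<eta> * \<mu>)^(n * k) * x$1"
    and "(epoch_start n (hard_comps \<mu> L m \<nu>) \<eta> s x k)$2 = kink_epochs L \<eta> m \<nu> n s (x$2) k"
  by (induction k) (simp_all add: inner_iter_hard_comps power_add mult_ac)

lemma avg_iterate_hard_comps:
  fixes x :: "real^2" and \<alpha> :: "nat \<Rightarrow> real" and K :: nat
  defines "w \<equiv> \<lambda>k. \<alpha> k / (\<Sum>k\<in>{1..K+1}. \<alpha> k)"
  shows "(avg_iterate n (hard_comps \<mu> L m \<nu>) \<eta> s x K \<alpha>)$1
           = (\<Sum>k\<in>{1..K+1}. w k * ((1 - \<eta> * \<mu>)^(n * (k - 1)) * x$1))"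
    and "(avg_iterate n (hard_comps \<mu> L m \<nu>) \<eta> s x K \<alpha>)$2
           = (\<Sum>k\<in>{1..K+1}. w k * kink_epochs L \<eta> m \<nu> n s (x$2) (k - 1))"
proof -
  have scale: "c * (\<Sum>k\<in>S. \<alpha> k * X k) = (\<Sum>k\<in>S. (\<alpha> k * c) * X k)" for c X and S :: "nat set"
    by (simp add: sum_distrib_left algebra_simps)
  show "(avg_iterate n (hard_comps \<mu> L m \<nu>) \<eta> s x K \<alpha>)$1
           = (\<Sum>k\<in>{1..K+1}. w k * ((1 - \<eta> * \<mu>)^(n * (k - 1)) * x$1))"
       "(avg_iterate n (hard_comps \<mu> L m \<nu>) \<eta> s x K \<alpha>)$2
           = (\<Sum>k\<in>{1..K+1}. w k * kink_epochs L \<eta> m \<nu> n s (x$2) (k - 1))"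
    unfolding avg_iterate_def w_def vector_scaleR_component sum_component real_scaleR_def
      epoch_start_hard_comps scale by simp_all
qed


section \<open>The final estimate\<close>

lemma epoch_gain_div_rate_ge:
  assumes n: "n \<ge> 2" and L: "L > 0" and eta: "\<eta> > 0" and nu: "\<nu> > 0" and small: "\<eta> * L * n \<le> 1/64"
  shows "epoch_gain L \<eta> \<nu> (n div 2) / epoch_rate L \<eta> n \<ge> \<eta> * \<nu> * sqrt n / 200"
proof -
  define m where "m = n div 2"
  have m: "real m \<ge> n / 4" "real m + 1 \<ge> n / 2" "sqrt m > 0"
    unfolding m_def using n by linarith+ (use n in simp)
  have "sqrt m \<ge> sqrt (n / 4)"
    using m(1) by (rule real_sqrt_le_mono)
  then have "sqrt m * (real m + 1) \<ge> sqrt n / 2 * (n / 2)"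
    using m by (intro mult_mono) (auto simp: real_sqrt_divide)
  moreover have "real m * (real m + 1) / sqrt m = sqrt m * (real m + 1)"
    using m(3) by (simp add: field_simps)
  ultimately have key: "real m * (real m + 1) / sqrt m \<ge> real n * sqrt n / 4"
    by (simp add: mult.commute)
  have rate: "0 < epoch_rate L \<eta> n" "epoch_rate L \<eta> n \<le> \<eta> * L * n"
    using epoch_rate_bounds[of \<eta> L n] n L eta small by auto
  have n0: "real n > 0" using n by simp
  define X where "X = 45/2048 * \<eta> * \<nu> * (real m * (real m + 1) / sqrt m) / n"
  have "\<eta> * \<nu> * sqrt n / 200 \<le> 45/2048 * \<eta> * \<nu> * (real n * sqrt n / 4) / n"
    using n eta nu by (simp add: field_simps)
  also have "\<dots> \<le> X"
    unfolding X_def using key eta nu n by (intro divide_right_mono mult_left_mono) auto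
  also have "X = epoch_gain L \<eta> \<nu> m / (\<eta> * L * n)"
  proof -
    have "epoch_gain L \<eta> \<nu> m = (\<eta> * L * n) * X"
      unfolding epoch_gain_def X_def using n0 m(3) by (simp add: field_simps power2_eq_square)
    then show ?thesis using eta L n by simp
  qed
  also have "\<dots> \<le> epoch_gain L \<eta> \<nu> m / epoch_rate L \<eta> n"
    using rate eta L nu by (intro divide_left_mono) (auto simp: epoch_gain_def)
  finally show ?thesis unfolding m_def .
qed

lemma epoch_gain_nonneg: "\<eta> \<ge> 0 \<Longrightarrow> L \<ge> 0 \<Longrightarrow> \<nu> \<ge> 0 \<Longrightarrow> epoch_gain L \<eta> \<nu> m \<ge> 0"
  unfolding epoch_gain_def by simp

lemma power_one_minus_mult_le: "0 \<le> r \<Longrightarrow> r \<le> 1 \<Longrightarrow> (1 - r)^j * (1 + r * j) \<le> (1::real)"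
proof (induction j)
  case (Suc j)
  have "(1 - r)^Suc j * (1 + r * Suc j) = (1 - r)^j * ((1 + r * j) - r * r * (j + 1))"
    by (simp add: algebra_simps)
  also have "\<dots> \<le> (1 - r)^j * (1 + r * j)"
    using Suc.prems by (intro mult_left_mono) auto
  finally show ?case using Suc by simp
qed simp

lemma geometric_sum_ge:
  fixes r :: real
  assumes "0 < r" "r \<le> 1" "r * j \<ge> 1"
  shows "(\<Sum>i<j. (1 - r)^i) \<ge> 1 / (2 * r)"
proof -
  have "(1 - r)^j * 2 \<le> (1 - r)^j * (1 + r * j)"
    using assms by (intro mult_left_mono) auto
  then have "(1 - r)^j \<le> 1/2"
    using power_one_minus_mult_le[of r j] assms by linarith
  moreover have "r * (\<Sum>i<j. (1 - r)^i) = 1 - (1 - r)^j"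
    using one_diff_power_eq[of "1 - r" j] by simp
  ultimately show ?thesis
    using assms by (simp add: field_simps)
qed

lemma power_one_minus_ge_half:
  assumes "0 \<le> a" "a \<le> 1" "real N * a \<le> 1/2"
  shows "(1 - a)^N \<ge> (1/2 :: real)"
  using Bernoulli_inequality[of "- a" N] assms by simp

lemma weighted_avg_dichotomy:
  fixes w A B :: "nat \<Rightarrow> real"
  assumes "finite S" and w: "\<And>k. k \<in> S \<Longrightarrow> w k \<ge> 0" "(\<Sum>k\<in>S. w k) = 1"
    and nonneg: "\<And>k. k \<in> S \<Longrightarrow> A k \<ge> 0 \<and> B k \<ge> 0"
    and alt: "\<And>k. k \<in> S \<Longrightarrow> A k \<ge> a \<or> B k \<ge> b"
  shows "(\<Sum>k\<in>S. w k * A k) \<ge> a / 2 \<or> (\<Sum>k\<in>S. w k * B k) \<ge> b / 2"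
proof -
  define S1 where "S1 = {k\<in>S. A k \<ge> a}"
  define W where "W = (\<Sum>k\<in>S1. w k)"
  have "W * a = (\<Sum>k\<in>S1. w k * a)"
    unfolding W_def by (simp add: sum_distrib_right)
  also have "\<dots> \<le> (\<Sum>k\<in>S1. w k * A k)"
    using w unfolding S1_def by (intro sum_mono mult_left_mono) auto
  also have "\<dots> \<le> (\<Sum>k\<in>S. w k * A k)"
    using assms unfolding S1_def by (intro sum_mono2) auto
  finally have A: "W * a \<le> (\<Sum>k\<in>S. w k * A k)" .
  have "(\<Sum>k\<in>S - S1. w k) = 1 - W"
    unfolding W_def using w assms(1) by (simp add: S1_def sum_diff)
  then have "(1 - W) * b = (\<Sum>k\<in>S - S1. w k * b)"
    by (simp add: sum_distrib_right[symmetric])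
  also have "\<dots> \<le> (\<Sum>k\<in>S - S1. w k * B k)"
    using w alt unfolding S1_def by (intro sum_mono mult_left_mono) force+
  also have "\<dots> \<le> (\<Sum>k\<in>S. w k * B k)"
    using assms by (intro sum_mono2) auto
  finally have B: "(1 - W) * b \<le> (\<Sum>k\<in>S. w k * B k)" .
  have "(\<Sum>k\<in>S. w k * A k) \<ge> 0" "(\<Sum>k\<in>S. w k * B k) \<ge> 0"
    using w nonneg by (auto intro!: sum_nonneg)
  moreover have "a / 2 \<le> W * a" if "W \<ge> 1/2" "a \<ge> 0"
    using that mult_right_mono[of "1/2" W a] by simp
  moreover have "b / 2 \<le> (1 - W) * b" if "W < 1/2" "b \<ge> 0"
    using that mult_right_mono[of "1/2" "1 - W" b] by simp
  ultimately show ?thesis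
    using A B by (cases "W \<ge> 1/2"; cases "a \<ge> 0"; cases "b \<ge> 0") linarith+
qed

lemma sum_pos_part_sq_ge:
  fixes X :: "'a \<Rightarrow> real" and b :: real
  assumes "b \<ge> 0" "(\<Sum>s\<in>P. X s) \<ge> card P * b"
  shows "(\<Sum>s\<in>P. (max (X s) 0)^2) \<ge> card P * b^2"
proof -
  have "2 * b * X s - b^2 \<le> (max (X s) 0)^2" for s
  proof (cases "X s \<ge> 0")
    case True
    then show ?thesis using zero_le_power2[of "X s - b"] by (simp add: power2_eq_square algebra_simps)
  next
    case False
    then have "2 * b * X s \<le> 0" "(max (X s) 0)^2 = 0"
      using assms(1) by (simp_all add: mult_nonneg_nonpos)
    then show ?thesis
      using zero_le_power2[of b] by linarith
  qed
  then have "(\<Sum>s\<in>P. 2 * b * X s - b^2) \<le> (\<Sum>s\<in>P. (max (X s) 0)^2)"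
    by (intro sum_mono)
  moreover have "2 * b * (card P * b) \<le> 2 * b * (\<Sum>s\<in>P. X s)"
    using assms by (intro mult_left_mono) auto
  moreover have "(\<Sum>s\<in>P. 2 * b * X s - b^2) = 2 * b * (\<Sum>s\<in>P. X s) - card P * b^2"
    by (simp add: sum_subtractf sum_distrib_left)
  moreover have "2 * b * (card P * b) = 2 * (card P * b^2)"
    by (simp add: power2_eq_square)
  ultimately show ?thesis by linarith
qed

lemma small_step_mult_le:
  fixes \<eta> \<mu> L :: real and n :: nat
  assumes "\<eta> > 0" "0 \<le> \<mu>" "\<mu> \<le> L" "n \<ge> 1" "\<eta> * L * n \<le> 1/64"
  shows "\<eta> * \<mu> \<le> 1/64"
proof -
  have "\<eta> * \<mu> \<le> \<eta> * L"
    using assms by (intro mult_left_mono) auto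
  also have "\<dots> \<le> \<eta> * L * n"
    using assms mult_left_mono[of 1 "real n" "\<eta> * L"] by simp
  finally show ?thesis using assms(5) by linarith
qed

lemma normalized_weights:
  fixes \<alpha> :: "nat \<Rightarrow> real"
  assumes "finite S" "\<forall>k\<in>S. \<alpha> k \<ge> 0" "\<exists>k\<in>S. \<alpha> k \<noteq> 0"
  shows "\<forall>k\<in>S. \<alpha> k / (\<Sum>k\<in>S. \<alpha> k) \<ge> 0" "(\<Sum>k\<in>S. \<alpha> k / (\<Sum>k\<in>S. \<alpha> k)) = 1"
proof -
  obtain k where "k \<in> S" "\<alpha> k > 0"
    using assms(2,3) by force
  then have "(\<Sum>k\<in>S. \<alpha> k) > 0"
    using assms(1,2) member_le_sum[of k S \<alpha>] by auto
  then show "\<forall>k\<in>S. \<alpha> k / (\<Sum>k\<in>S. \<alpha> k) \<ge> 0" "(\<Sum>k\<in>S. \<alpha> k / (\<Sum>k\<in>S. \<alpha> k)) = 1"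
    using assms(2) by (simp_all add: sum_divide_distrib[symmetric])
qed

definition avg_first_coord :: "nat \<Rightarrow> nat \<Rightarrow> real \<Rightarrow> real \<Rightarrow> real \<Rightarrow> (nat \<Rightarrow> real) \<Rightarrow> real" where
  "avg_first_coord n K \<mu> \<eta> D w = (\<Sum>k\<in>{1..K+1}. w k * ((1 - \<eta> * \<mu>)^(n * (k - 1)) * D))"

definition avg_drift_lb :: "nat \<Rightarrow> nat \<Rightarrow> real \<Rightarrow> real \<Rightarrow> real \<Rightarrow> (nat \<Rightarrow> real) \<Rightarrow> real" where
  "avg_drift_lb n K L \<eta> \<nu> w =
     (\<Sum>k\<in>{1..K+1}. w k * (epoch_gain L \<eta> \<nu> (n div 2) * (\<Sum>i<k - 1. (1 - epoch_rate L \<eta> n)^i)))"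

lemma expect_rr_hard_fn_ge:
  fixes \<alpha> :: "nat \<Rightarrow> real"
  assumes n: "n \<ge> 2" and L: "L > 0" and nu: "\<nu> > 0" and eta: "\<eta> > 0"
    and small: "\<eta> * L * n \<le> 1/64" and \<alpha>: "\<forall>k\<in>{1..K+1}. \<alpha> k \<ge> 0"
  defines "w \<equiv> \<lambda>k. \<alpha> k / (\<Sum>k\<in>{1..K+1}. \<alpha> k)"
  shows "expect_rr n K (\<lambda>s. hard_fn \<mu> L 0 (avg_iterate n (hard_comps \<mu> L (n div 2) \<nu>) \<eta> s (vector [D, 0]) K \<alpha>))
           \<ge> \<mu>/2 * (avg_first_coord n K \<mu> \<eta> D w)^2 + L/4 * (avg_drift_lb n K L \<eta> \<nu> w)^2"
proof -
  define x where "x s = avg_iterate n (hard_comps \<mu> L (n div 2) \<nu>) \<eta> s (vector [D, 0]) K \<alpha>" for s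
  define P where "P = perm_seqs n K"
  define S where "S = {1..K+1}"
  define N where "N = real (card P)"
  define a where "a = avg_first_coord n K \<mu> \<eta> D w"
  define B where "B k = epoch_gain L \<eta> \<nu> (n div 2) * (\<Sum>i<k - 1. (1 - epoch_rate L \<eta> n)^i)" for k
  define b where "b = (\<Sum>k\<in>S. w k * B k)"
  have w: "w k \<ge> 0" if "k \<in> S" for k
    unfolding w_def using \<alpha> that unfolding S_def by (intro divide_nonneg_nonneg sum_nonneg) auto
  have "epoch_rate L \<eta> n \<le> 1"
    using epoch_rate_bounds(3)[of \<eta> L n] n eta L small by simp
  then have b: "b \<ge> 0"
    unfolding b_def B_def using w L nu eta
    by (intro sum_nonneg mult_nonneg_nonneg epoch_gain_nonneg) auto
  have "N * b = (\<Sum>k\<in>S. w k * (N * B k))"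
    unfolding b_def by (simp add: sum_distrib_left mult_ac)
  also have "\<dots> \<le> (\<Sum>k\<in>S. w k * (\<Sum>s\<in>P. kink_epochs L \<eta> (n div 2) \<nu> n s 0 (k - 1)))"
    unfolding N_def P_def B_def using w n
    by (intro sum_mono mult_left_mono sum_kink_epochs_ge L eta nu small) (auto simp: S_def)
  also have "\<dots> = (\<Sum>s\<in>P. (x s)$2)"
    unfolding x_def avg_iterate_hard_comps w_def S_def by (simp add: sum_distrib_left sum.swap[of _ P])
  finally have "N * b^2 \<le> (\<Sum>s\<in>P. (max ((x s)$2) 0)^2)"
    unfolding N_def using b by (intro sum_pos_part_sq_ge)
  then have "N * (\<mu>/2 * a^2 + L/4 * b^2) \<le> N * (\<mu>/2 * a^2) + L/4 * (\<Sum>s\<in>P. (max ((x s)$2) 0)^2)"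
    using L by (simp add: algebra_simps)
  also have "\<dots> = (\<Sum>s\<in>P. \<mu>/2 * a^2 + L/4 * (max ((x s)$2) 0)^2)"
    unfolding N_def by (simp add: sum.distrib sum_distrib_left)
  also have "\<dots> \<le> (\<Sum>s\<in>P. hard_fn \<mu> L 0 (x s))"
    using kinked_quad_ge L
    unfolding hard_fn_def x_def avg_iterate_hard_comps a_def avg_first_coord_def w_def
    by (intro sum_mono) simp
  finally have "\<mu>/2 * a^2 + L/4 * b^2 \<le> (\<Sum>s\<in>P. hard_fn \<mu> L 0 (x s)) / N"
    using card_perm_seqs_pos unfolding N_def P_def by (simp add: field_simps)
  then show ?thesis
    unfolding expect_rr_def x_def a_def b_def B_def S_def P_def N_def avg_drift_lb_def .
qed

lemma contraction_or_drift:
  assumes n: "n \<ge> 2" and L: "L > 0" and nu: "\<nu> > 0" and D: "D > 0" and mu: "\<mu> > 0" "\<mu> \<le> L/4"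
    and eta: "\<eta> > 0" and small: "\<eta> * L * n \<le> 1/64"
  shows "(1 - \<eta> * \<mu>)^(n * j) * D \<ge> D/2
         \<or> epoch_gain L \<eta> \<nu> (n div 2) * (\<Sum>i<j. (1 - epoch_rate L \<eta> n)^i) \<ge> \<eta> * \<nu> * sqrt n / 400"
proof -
  define \<rho> where "\<rho> = epoch_rate L \<eta> n"
  have \<rho>: "0 < \<rho>" "3/4 * (\<eta> * L * n) \<le> \<rho>" "\<rho> \<le> 1"
    using epoch_rate_bounds[of \<eta> L n] n L eta small unfolding \<rho>_def by auto
  have emu: "0 \<le> \<eta> * \<mu>" "\<eta> * \<mu> \<le> 1"
    using small_step_mult_le[of \<eta> \<mu> L n] mu eta small n by auto
  show ?thesis
  proof (cases "\<rho> * j < 1")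
    case True
    have "real (n * j) * (\<eta> * \<mu>) = real j * (real n * \<eta> * \<mu>)"
      by simp
    also have "\<dots> \<le> (1 / \<rho>) * (real n * \<eta> * \<mu>)"
      using True \<rho> eta mu by (intro mult_right_mono) (auto simp: field_simps)
    also have "\<dots> \<le> (1 / (3/4 * (\<eta> * L * n))) * (real n * \<eta> * \<mu>)"
      using \<rho> eta L n mu by (intro mult_right_mono divide_left_mono) auto
    also have "\<dots> \<le> 1/2"
      using eta L n mu by (simp add: field_simps)
    finally have "(1 - \<eta> * \<mu>)^(n * j) \<ge> 1/2"
      using power_one_minus_ge_half emu by blast
    then show ?thesis
      using D by (simp add: mult_left_mono)
  next
    case False
    define C where "C = epoch_gain L \<eta> \<nu> (n div 2)"
    have "\<eta> * \<nu> * sqrt n / 400 = (\<eta> * \<nu> * sqrt n / 200) / 2"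
      by simp
    also have "\<dots> \<le> (C / \<rho>) / 2"
      using epoch_gain_div_rate_ge[OF n L eta nu small] unfolding \<rho>_def C_def by (simp add: mult.commute)
    also have "\<dots> = C * (1 / (2 * \<rho>))"
      by simp
    also have "\<dots> \<le> C * (\<Sum>i<j. (1 - \<rho>)^i)"
      using \<rho> False geometric_sum_ge[of \<rho> j] eta L nu unfolding C_def
      by (intro mult_left_mono epoch_gain_nonneg) auto
    finally show ?thesis
      unfolding \<rho>_def C_def by simp
  qed
qed

lemma first_coord_or_drift:
  fixes w :: "nat \<Rightarrow> real"
  assumes n: "n \<ge> 2" and K: "K \<ge> 1" and L: "L > 0" and nu: "\<nu> > 0" and D: "D > 0"
    and mu: "\<mu> > 0" "\<mu> \<le> L/4" and eta: "\<eta> > 0" and small: "\<eta> * L * n \<le> 1/64"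
    and w: "\<forall>k\<in>{1..K+1}. w k \<ge> 0" "(\<Sum>k\<in>{1..K+1}. w k) = 1"
  shows "avg_first_coord n K \<mu> \<eta> D w \<ge> D/4
         \<or> avg_drift_lb n K L \<eta> \<nu> w \<ge> \<eta> * \<nu> * sqrt n / 800 \<and> \<eta> \<ge> 1 / (2 * \<mu> * n * K)"
proof -
  define A where "A k = (1 - \<eta> * \<mu>)^(n * (k - 1)) * D" for k
  define B where "B k = epoch_gain L \<eta> \<nu> (n div 2) * (\<Sum>i<k - 1. (1 - epoch_rate L \<eta> n)^i)" for k
  have "\<eta> * \<mu> \<le> 1"
    using small_step_mult_le[of \<eta> \<mu> L n] mu eta small n by auto
  moreover have "epoch_rate L \<eta> n \<le> 1"
    using epoch_rate_bounds(3)[of \<eta> L n] n eta L small by simp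
  ultimately have nonneg: "A k \<ge> 0 \<and> B k \<ge> 0" for k
    unfolding A_def B_def using D eta L nu by (auto intro!: sum_nonneg mult_nonneg_nonneg epoch_gain_nonneg)
  show ?thesis
  proof (cases "\<eta> \<le> 1 / (2 * \<mu> * n * K)")
    case True
    have "A k \<ge> D/2" if "k \<in> {1..K+1}" for k
    proof -
      have "real (n * (k - 1)) * (\<eta> * \<mu>) \<le> real n * real K * (1 / (2 * \<mu> * n * K) * \<mu>)"
        using that True mu eta by (intro mult_mono) (auto simp: mult_left_mono)
      also have "\<dots> = 1/2"
        using mu n K by (simp add: field_simps)
      finally show ?thesis
        unfolding A_def using power_one_minus_ge_half[of "\<eta> * \<mu>"] \<open>\<eta> * \<mu> \<le> 1\<close> eta mu D
        by (simp add: mult_left_mono)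
    qed
    then have "(\<Sum>k\<in>{1..K+1}. w k * (D/2)) \<le> avg_first_coord n K \<mu> \<eta> D w"
      unfolding avg_first_coord_def A_def[symmetric] using w by (intro sum_mono mult_left_mono) auto
    moreover have "(\<Sum>k\<in>{1..K+1}. w k * (D/2)) = D/2"
      by (simp only: sum_distrib_right[symmetric] w(2))
    ultimately show ?thesis
      using D by auto
  next
    case False
    have "(\<Sum>k\<in>{1..K+1}. w k * A k) \<ge> (D/2) / 2 \<or> (\<Sum>k\<in>{1..K+1}. w k * B k) \<ge> (\<eta> * \<nu> * sqrt n / 400) / 2"
      using w nonneg contraction_or_drift[OF n L nu D mu eta small]
      by (intro weighted_avg_dichotomy) (auto simp: A_def B_def)
    then show ?thesis
      using False unfolding avg_first_coord_def avg_drift_lb_def A_def B_def by auto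
  qed
qed

lemma drift_term_ge:
  fixes n K :: nat and \<mu> L D \<nu> \<eta> b :: real
  assumes mu: "\<mu> > 0" and L: "L > 0" and n: "n \<ge> 1" and K: "K \<ge> 1"
    and balance: "\<mu>^3 * (D^2 * real n * real K ^ 2) = L * \<nu>^2"
    and eta: "\<eta> \<ge> 1 / (2 * \<mu> * n * K)" and b: "b \<ge> \<eta> * \<nu> * sqrt n / 800" and "\<nu> > 0"
  shows "L/4 * b^2 \<ge> \<mu> * D^2 / 10240000"
proof -
  have "0 < 1 / (2 * \<mu> * n * K)"
    using mu n K by simp
  then have "\<eta> > 0"
    using eta by linarith
  have "(1 / (2 * \<mu> * n * K))^2 \<le> \<eta>^2"
    using eta mu n K by (intro power_mono) auto
  then have "(1 / (2 * \<mu> * n * K))^2 * \<nu>^2 * n / 640000 \<le> \<eta>^2 * \<nu>^2 * n / 640000"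
    by (intro divide_right_mono mult_right_mono) auto
  also have "\<eta>^2 * \<nu>^2 * n / 640000 = (\<eta> * \<nu> * sqrt n / 800)^2"
    by (simp add: power_mult_distrib power_divide)
  also have "\<dots> \<le> b^2"
    using b \<open>\<eta> > 0\<close> \<open>\<nu> > 0\<close> by (intro power_mono) auto
  finally have "L/4 * ((1 / (2 * \<mu> * n * K))^2 * \<nu>^2 * n / 640000) \<le> L/4 * b^2"
    using L by (intro mult_left_mono) auto
  moreover have "L * \<nu>^2 = (\<mu> * D^2) * (\<mu>^2 * n * K^2)"
    using balance by (simp add: power3_eq_cube power2_eq_square algebra_simps)
  then have "L/4 * ((1 / (2 * \<mu> * n * K))^2 * \<nu>^2 * n / 640000) = \<mu> * D^2 / 10240000"
    using mu n K by (simp add: field_simps power2_eq_square)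
  ultimately show ?thesis by simp
qed

lemma avg_coords_objective_ge:
  fixes w :: "nat \<Rightarrow> real"
  assumes n: "n \<ge> 2" and K: "K \<ge> 1" and L: "L > 0" and nu: "\<nu> > 0" and D: "D > 0"
    and mu: "\<mu> > 0" "\<mu> \<le> L/4" and balance: "\<mu>^3 * (D^2 * real n * real K ^ 2) = L * \<nu>^2"
    and eta: "\<eta> > 0" and small: "\<eta> * L * n \<le> 1/64"
    and w: "\<forall>k\<in>{1..K+1}. w k \<ge> 0" "(\<Sum>k\<in>{1..K+1}. w k) = 1"
  shows "\<mu>/2 * (avg_first_coord n K \<mu> \<eta> D w)^2 + L/4 * (avg_drift_lb n K L \<eta> \<nu> w)^2 \<ge> \<mu> * D^2 / 2^30"
  using first_coord_or_drift[OF n K L nu D mu eta small w]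
proof
  assume "avg_first_coord n K \<mu> \<eta> D w \<ge> D/4"
  then have "\<mu>/2 * (D/4)^2 \<le> \<mu>/2 * (avg_first_coord n K \<mu> \<eta> D w)^2"
    using mu D by (intro mult_left_mono power_mono) auto
  moreover have "\<mu>/2 * (D/4)^2 = \<mu> * D^2 / 32"
    by (simp add: power2_eq_square)
  moreover have "\<mu> * D^2 / 2^30 \<le> \<mu> * D^2 / 32"
    using mu by (intro divide_left_mono) auto
  moreover have "L/4 * (avg_drift_lb n K L \<eta> \<nu> w)^2 \<ge> 0"
    using L by simp
  ultimately show ?thesis by linarith
next
  assume "avg_drift_lb n K L \<eta> \<nu> w \<ge> \<eta> * \<nu> * sqrt n / 800 \<and> \<eta> \<ge> 1 / (2 * \<mu> * n * K)"
  then have "L/4 * (avg_drift_lb n K L \<eta> \<nu> w)^2 \<ge> \<mu> * D^2 / 10240000"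
    using n K by (intro drift_term_ge[OF mu(1) L _ _ balance _ _ nu]) auto
  moreover have "\<mu> * D^2 / 2^30 \<le> \<mu> * D^2 / 10240000"
    using mu by (intro divide_left_mono) auto
  moreover have "\<mu>/2 * (avg_first_coord n K \<mu> \<eta> D w)^2 \<ge> 0"
    using mu by simp
  ultimately show ?thesis by linarith
qed

lemma cube_balance:
  fixes L \<nu> D n K :: real
  assumes pos: "L > 0" "\<nu> > 0" "D > 0" "n > 0" "K > 0"
  defines "\<mu> \<equiv> L powr (1/3) * \<nu> powr (2/3) / (D powr (2/3) * n powr (1/3) * K powr (2/3))"
  shows "\<mu> > 0" "\<mu>^3 * (D^2 * n * K^2) = L * \<nu>^2"
    and "L powr (1/3) * \<nu> powr (2/3) * D powr (4/3) / (n powr (1/3) * K powr (2/3)) = \<mu> * D^2"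
proof -
  show "\<mu> > 0" unfolding \<mu>_def using pos by simp
  have cube: "(x powr (k/3))^3 = x powr k" if "x > 0" for x k :: real
    using that by (simp add: powr_power)
  have "\<mu>^3 = L * \<nu> powr 2 / (D powr 2 * n * K powr 2)"
    unfolding \<mu>_def using pos by (simp add: power_divide power_mult_distrib cube[of _ 1, simplified] cube)
  then show "\<mu>^3 * (D^2 * n * K^2) = L * \<nu>^2"
    using pos by (simp add: powr_numeral)
  have "D powr (4/3) * D powr (2/3) = D^2"
    using pos powr_add[of D "4/3" "2/3", symmetric] by (simp add: powr_numeral)
  then show "L powr (1/3) * \<nu> powr (2/3) * D powr (4/3) / (n powr (1/3) * K powr (2/3)) = \<mu> * D^2"
    unfolding \<mu>_def using pos by (simp add: field_simps)
qed

lemma balance_le_quarter: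
  assumes mu: "\<mu> > 0" and pos: "D > 0" "n > 0" "\<nu> > 0"
    and balance: "\<mu>^3 * (D^2 * real n * real K ^ 2) = L * \<nu>^2" and K: "K \<ge> 64 * (\<nu> / (\<mu> * D * sqrt n))"
  shows "\<mu> \<le> L/4"
proof -
  have "64 * \<nu> \<le> K * (\<mu> * D * sqrt n)"
    using K mu pos by (simp add: field_simps)
  then have "(64 * \<nu>)^2 \<le> (K * (\<mu> * D * sqrt n))^2"
    using pos by (intro power_mono) auto
  then have "\<mu> * (64 * \<nu>)^2 \<le> \<mu> * (\<mu>^2 * (D^2 * n * K^2))"
    using mu pos by (intro mult_left_mono) (auto simp: power_mult_distrib algebra_simps)
  also have "\<dots> = L * \<nu>^2"
    using balance by (simp add: power3_eq_cube power2_eq_square algebra_simps)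
  finally show ?thesis
    using mu pos by (simp add: power_mult_distrib)
qed

lemma hard_instance_lower_bound:
  fixes n K :: nat and L \<nu> D :: real
  defines "\<mu> \<equiv> L powr (1/3) * \<nu> powr (2/3) / (D powr (2/3) * real n powr (1/3) * real K powr (2/3))"
  assumes n: "n \<ge> 2" and L: "L > 0" and nu: "\<nu> > 0" and D: "D > 0" and K: "K \<ge> 1"
    and K_large: "real K \<ge> 64 * (\<nu> / (\<mu> * D * sqrt (real n)))"
  shows "\<exists>(f :: nat \<Rightarrow> real^2 \<Rightarrow> real) (xstar :: real^2) (x0 :: real^2).
           fclass n L 0 0 \<nu> f \<and> (\<forall>x. Fsum n f xstar \<le> Fsum n f x) \<and> norm (x0 - xstar) = D \<and>
           (\<forall>(\<eta>::real) (\<alpha>::nat \<Rightarrow> real).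
              0 < \<eta> \<and> \<eta> \<le> 1 / (64 * L * real n) \<and>
              (\<forall>k\<in>{1..K+1}. \<alpha> k \<ge> 0) \<and> (\<exists>k\<in>{1..K+1}. \<alpha> k \<noteq> 0)
              \<longrightarrow> expect_rr n K (\<lambda>s. Fsum n f (avg_iterate n f \<eta> s x0 K \<alpha>) - (INF x. Fsum n f x))
                    \<ge> 1 / 2^30 * (L powr (1/3) * \<nu> powr (2/3) * D powr (4/3)
                                   / (real n powr (1/3) * real K powr (2/3))))"
proof -
  have pos: "real n > 0" "real K > 0"
    using n K by auto
  note balance = cube_balance[OF L nu D pos, folded \<mu>_def]
  have mu: "\<mu> > 0" "\<mu> \<le> L/4"
    using balance(1) balance_le_quarter[OF balance(1) D _ nu balance(2) K_large] n by auto
  define f where "f = hard_comps \<mu> L (n div 2) \<nu>"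
  have F: "Fsum n f = hard_fn \<mu> L 0"
    unfolding f_def using n by (intro Fsum_hard_comps) auto
  show ?thesis
  proof (rule exI[of _ f], rule exI[of _ 0], rule exI[of _ "vector [D, 0]"], intro conjI allI impI)
    show "fclass n L 0 0 \<nu> f"
      unfolding f_def using n mu nu by (intro hard_comps_fclass) auto
  next
    fix x :: "real^2"
    show "Fsum n f 0 \<le> Fsum n f x"
      unfolding F hard_fn_0 using L mu by (auto intro: hard_fn_nonneg)
  next
    show "norm (vector [D, 0] - 0 :: real^2) = D"
      using D by (simp add: norm_eq_sqrt_inner inner_vec2)
  next
    fix \<eta> and \<alpha> :: "nat \<Rightarrow> real"
    assume step: "0 < \<eta> \<and> \<eta> \<le> 1 / (64 * L * real n) \<and> (\<forall>k\<in>{1..K+1}. \<alpha> k \<ge> 0) \<and> (\<exists>k\<in>{1..K+1}. \<alpha> k \<noteq> 0)"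
    then have small: "\<eta> * L * n \<le> 1/64"
      using L pos by (simp add: field_simps)
    define w where "w = (\<lambda>k. \<alpha> k / (\<Sum>k\<in>{1..K+1}. \<alpha> k))"
    have w: "\<forall>k\<in>{1..K+1}. w k \<ge> 0" "(\<Sum>k\<in>{1..K+1}. w k) = 1"
      unfolding w_def using normalized_weights[of "{1..K+1}" \<alpha>] step by auto
    have "\<mu> * D^2 / 2^30 \<le> \<mu>/2 * (avg_first_coord n K \<mu> \<eta> D w)^2 + L/4 * (avg_drift_lb n K L \<eta> \<nu> w)^2"
      using step small by (intro avg_coords_objective_ge[OF n K L nu D mu balance(2) _ _ w]) auto
    also have "\<dots> \<le> expect_rr n K (\<lambda>s. hard_fn \<mu> L 0 (avg_iterate n f \<eta> s (vector [D, 0]) K \<alpha>))"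
      unfolding f_def w_def using step small by (intro expect_rr_hard_fn_ge[OF n L nu]) auto
    finally show "expect_rr n K (\<lambda>s. Fsum n f (avg_iterate n f \<eta> s (vector [D, 0]) K \<alpha>) - (INF x. Fsum n f x))
        \<ge> 1 / 2^30 * (L powr (1/3) * \<nu> powr (2/3) * D powr (4/3) / (real n powr (1/3) * real K powr (2/3)))"
      unfolding F INF_hard_fn[OF less_imp_le[OF L] less_imp_le[OF mu(1)]] balance(3) by simp
  qed
qed

theorem corollary5:
  "\<exists>c2 c3 c :: real. c2 > 0 \<and> c3 > 0 \<and> c > 0 \<and>
    (\<forall>(n::nat) (L::real) (\<nu>::real) (D::real) (K::nat).
      n \<ge> 2 \<and> L > 0 \<and> \<nu> > 0 \<and> D > 0 \<and> K \<ge> 1 \<and>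
      real K \<ge> c3 * max (L\<^sup>2 * D\<^sup>2 * real n / \<nu>\<^sup>2)
         (\<nu> / ((L powr (1/3) * \<nu> powr (2/3) / (D powr (2/3) * real n powr (1/3) * real K powr (2/3)))
               * D * sqrt (real n)))
      \<longrightarrow>
      (\<exists>(f :: nat \<Rightarrow> real^2 \<Rightarrow> real) (xstar :: real^2) (x0 :: real^2).
         fclass n L 0 0 \<nu> f \<and>
         (\<forall>x. Fsum n f xstar \<le> Fsum n f x) \<and>
         norm (x0 - xstar) = D \<and>
         (\<forall>(\<eta>::real) (\<alpha>::nat \<Rightarrow> real).
            0 < \<eta> \<and> \<eta> \<le> 1 / (c2 * L * real n) \<and>
            (\<forall>k\<in>{1..K+1}. \<alpha> k \<ge> 0) \<and> (\<exists>k\<in>{1..K+1}. \<alpha> k \<noteq> 0)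
            \<longrightarrow>
            expect_rr n K (\<lambda>s. Fsum n f (avg_iterate n f \<eta> s x0 K \<alpha>) - (INF x. Fsum n f x))
              \<ge> c * (L powr (1/3) * \<nu> powr (2/3) * D powr (4/3) / (real n powr (1/3) * real K powr (2/3))))))"
proof (rule exI[of _ 64], rule exI[of _ 64], rule exI[of _ "1 / 2^30"], intro conjI allI impI, goal_cases)
  case (4 n L \<nu> D K)
  \<comment> \<open>only the second term of the \<open>max\<close> is needed\<close>
  then show ?case
    by (intro hard_instance_lower_bound) (auto intro: order_trans[OF mult_left_mono[OF max.cobounded2]])
qed simp_all

end
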